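(* Assume Assumption A and the clustering setup. Consider the reduced networked system $\hat\Sigma$: $\dot\xi=(I_{\bar n-1}\otimes A-\hat L\otimes BC)\xi+(\hat G\otimes B)u$, $\hat y=(\hat H\otimes C)\xi$, where $\hat L=W^\top LV$, $\hat G=W^\top G$, $\hat H=HV$, $\xi=(\xi_1,\dots,\xi_{\bar n-1})$, $\xi_p\in\mathbb{R}^n$. Then for $u\equiv0$ every solution satisfies $\lim_{t\to\infty}(\xi_p(t)-\xi_q(t))=0$ for all $p,q\in\{1,\dots,\bar n-1\}$.
   Context: Subsystem data: $Q=Q^\top\succ0$, $J=-J^\top$, $R=R^\top\succeq0$ in $\mathbb{R}^{n\times n}$, $B\in\mathbb{R}^{n\times m}$, $A=(J-R)Q$, $C=B^\top Q$, with $(A,B,C)$ a minimal realization. Weights $w_{ij}\ge0$ ($i\ne j\in\{1,\dots,\bar n\}$, $\bar n\ge3$); $L_{ij}=-w_{ij}$ for $i\neq j$, $L_{ii}=\sum_{j\ne i}w_{ij}$; $G\in\mathbb{R}^{\bar n\times\bar m}$, $H\in\mathbb{R}^{\bar p\times\bar n}$. The directed graph $\mathcal G$ has an arc $(i,j)$ iff $w_{ji}>0$; the underlying undirected graph $\mathcal G_u$ has an edge between $i$ and $j$ iff $w_{ij}+w_{ji}>0$. A directed rooted spanning tree is a subgraph that is a directed tree containing all vertices in which every vertex except one root has exactly one incoming arc. Assumption A: (i) $\mathcal G_u$ is a tree; (ii) $\mathcal G$ contains a directed rooted spanning tree. Clustering setup: vertices numbered so that vertices $i=\bar n-1$ and $j=\bar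 n$ are adjacent in $\mathcal G_u$, and $V=\begin{bmatrix}I_{\bar n-2}&0\\0&1\\0&1\end{bmatrix}$, $W=\begin{bmatrix}I_{\bar n-2}&0\\0&\frac{w_{ji}}{w_{ij}+w_{ji}}\\0&\frac{w_{ij}}{w_{ij}+w_{ji}}\end{bmatrix}$. $\otimes$ is the Kronecker product. *)

theory Defs
  imports Complex_Main "Jordan_Normal_Form.Matrix"
begin

definition kron :: "real mat \<Rightarrow> real mat \<Rightarrow> real mat" where
  "kron A B = mat (dim_row A * dim_row B) (dim_col A * dim_col B)
     (\<lambda>(i,j). A $$ (i div dim_row B, j div dim_col B) * B $$ (i mod dim_row B, j mod dim_col B))"

definition sym_mat :: "real mat \<Rightarrow> bool" where
  "sym_mat M \<longleftrightarrow> transpose_mat M = M"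

definition skew_mat :: "real mat \<Rightarrow> bool" where
  "skew_mat M \<longleftrightarrow> transpose_mat M = - M"

definition pos_def :: "nat \<Rightarrow> real mat \<Rightarrow> bool" where
  "pos_def n M \<longleftrightarrow> M \<in> carrier_mat n n \<and> sym_mat M \<and>
     (\<forall>x \<in> carrier_vec n. x \<noteq> 0\<^sub>v n \<longrightarrow> x \<bullet> (M *\<^sub>v x) > 0)"

definition pos_semidef :: "nat \<Rightarrow> real mat \<Rightarrow> bool" where
  "pos_semidef n M \<longleftrightarrow> M \<in> carrier_mat n n \<and> sym_mat M \<and>
     (\<forall>x \<in> carrier_vec n. x \<bullet> (M *\<^sub>v x) \<ge> 0)"

text \<open>Kalman rank conditions: the controllability matrix [B, AB, ..., A^(n-1) B] has
  full row rank n (trivial left kernel), the observability matrix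
  [C; CA; ...; C A^(n-1)] has full column rank n (trivial kernel).\<close>

definition controllable :: "nat \<Rightarrow> real mat \<Rightarrow> real mat \<Rightarrow> bool" where
  "controllable n A B \<longleftrightarrow>
     (\<forall>v \<in> carrier_vec n. (\<forall>k < n. (transpose_mat (A ^\<^sub>m k * B)) *\<^sub>v v = 0\<^sub>v (dim_col B))
        \<longrightarrow> v = 0\<^sub>v n)"

definition observable :: "nat \<Rightarrow> real mat \<Rightarrow> real mat \<Rightarrow> bool" where
  "observable n A C \<longleftrightarrow>
     (\<forall>v \<in> carrier_vec n. (\<forall>k < n. (C * A ^\<^sub>m k) *\<^sub>v v = 0\<^sub>v (dim_row C))
        \<longrightarrow> v = 0\<^sub>v n)"

definition minimal_realization :: "nat \<Rightarrow> real mat \<Rightarrow> real mat \<Rightarrow> real mat \<Rightarrow> bool" where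
  "minimal_realization n A B C \<longleftrightarrow> controllable n A B \<and> observable n A C"

definition is_walk :: "(nat \<Rightarrow> nat \<Rightarrow> bool) \<Rightarrow> nat \<Rightarrow> nat list \<Rightarrow> bool" where
  "is_walk adj N vs \<longleftrightarrow> vs \<noteq> [] \<and> set vs \<subseteq> {0..<N} \<and>
     (\<forall>k. Suc k < length vs \<longrightarrow> adj (vs ! k) (vs ! Suc k))"

definition ugraph_connected :: "(nat \<Rightarrow> nat \<Rightarrow> bool) \<Rightarrow> nat \<Rightarrow> bool" where
  "ugraph_connected adj N \<longleftrightarrow>
     (\<forall>i < N. \<forall>j < N. \<exists>vs. is_walk adj N vs \<and> hd vs = i \<and> last vs = j)"

definition is_cycle :: "(nat \<Rightarrow> nat \<Rightarrow> bool) \<Rightarrow> nat \<Rightarrow> nat list \<Rightarrow> bool" where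
  "is_cycle adj N vs \<longleftrightarrow> length vs \<ge> 3 \<and> distinct vs \<and> is_walk adj N vs \<and> adj (last vs) (hd vs)"

definition ugraph_tree :: "(nat \<Rightarrow> nat \<Rightarrow> bool) \<Rightarrow> nat \<Rightarrow> bool" where
  "ugraph_tree adj N \<longleftrightarrow> ugraph_connected adj N \<and> (\<nexists>vs. is_cycle adj N vs)"

definition arcs :: "(nat \<Rightarrow> nat \<Rightarrow> real) \<Rightarrow> nat \<Rightarrow> (nat \<times> nat) set" where
  "arcs w N = {(i,j). i < N \<and> j < N \<and> i \<noteq> j \<and> w j i > 0}"

definition und_adj :: "(nat \<Rightarrow> nat \<Rightarrow> real) \<Rightarrow> nat \<Rightarrow> nat \<Rightarrow> bool" where
  "und_adj w i j \<longleftrightarrow> i \<noteq> j \<and> w i j + w j i > 0"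

definition has_directed_rooted_spanning_tree :: "(nat \<Rightarrow> nat \<Rightarrow> real) \<Rightarrow> nat \<Rightarrow> bool" where
  "has_directed_rooted_spanning_tree w N \<longleftrightarrow>
     (\<exists>T r. T \<subseteq> arcs w N \<and> r < N \<and>
        (\<forall>v < N. v \<noteq> r \<longrightarrow> (\<exists>!u. (u, v) \<in> T)) \<and> (\<forall>u. (u, r) \<notin> T) \<and>
        ugraph_tree (\<lambda>a b. (a, b) \<in> T \<or> (b, a) \<in> T) N)"

definition laplacian :: "(nat \<Rightarrow> nat \<Rightarrow> real) \<Rightarrow> nat \<Rightarrow> real mat" where
  "laplacian w N = mat N N (\<lambda>(i,j). if i = j then (\<Sum>k \<in> {0..<N} - {i}. w i k) else - w i j)"

section \<open>Clustering matrices (vertices 0-based: i = N-2, j = N-1)\<close>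

definition clusterV :: "nat \<Rightarrow> real mat" where
  "clusterV N = mat N (N - 1) (\<lambda>(r,c). if r < N - 2 then (if r = c then 1 else 0)
                                       else (if c = N - 2 then 1 else 0))"

definition clusterW :: "(nat \<Rightarrow> nat \<Rightarrow> real) \<Rightarrow> nat \<Rightarrow> real mat" where
  "clusterW w N = mat N (N - 1) (\<lambda>(r,c). if r < N - 2 then (if r = c then 1 else 0)
      else if c \<noteq> N - 2 then 0
      else if r = N - 2 then w (N - 1) (N - 2) / (w (N - 2) (N - 1) + w (N - 1) (N - 2))
      else w (N - 2) (N - 1) / (w (N - 2) (N - 1) + w (N - 1) (N - 2)))"

end

(*
  The rows of the clustered Laplacian L sum to zero, so the deviations xi_(p+1) - xi_1 obey
  the autonomous system I (x) A - D (x) BC, where D is L acting on differences. Clustering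
  keeps the Laplacian sign pattern and the cluster of the root of the spanning tree stays
  globally reachable; hence all eigenvalues of D have positive real part (Gershgorin's
  theorem for nonzero ones, the minimum principle against zero). For Re lambda > 0 the
  storage z* Q z shows that A - lambda BC is Hurwitz: J is skew, R and lambda B B^T dissipate,
  and observability rules out undamped modes. Triangularizing D reduces the spectrum of the
  difference system to these blocks, so the deviations decay.
*)

theory Submission
  imports Defs "Jordan_Normal_Form.Schur_Decomposition" "HOL-Analysis.Analysis"
    "HOL-Real_Asymp.Real_Asymp"
begin

hide_type (open) Finite_Cartesian_Product.vec \<comment> \<open>\<open>vec\<close> is \<open>Matrix.vec\<close> in \<open>theorem3\<close>\<close>

section \<open>Linear differential equations with Hurwitz matrices\<close>

lemma tendsto_zero_of_deriv_le:
  fixes u h :: "real \<Rightarrow> real" and c :: real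
  assumes c: "c > 0" and u_nonneg: "\<And>t. t > 0 \<Longrightarrow> u t \<ge> 0"
    and der: "\<And>t. t > 0 \<Longrightarrow> \<exists>u'. (u has_real_derivative u') (at t) \<and> u' \<le> - c * u t + h t"
    and h: "(h \<longlongrightarrow> 0) at_top"
  shows "(u \<longlongrightarrow> 0) at_top"
proof (rule tendstoI)
  fix e :: real assume e: "e > 0"
  have "eventually (\<lambda>t. dist (h t) 0 < c * e / 2) at_top"
    using tendstoD[OF h, of "c * e / 2"] c e by auto
  then obtain T0 where T0_dist: "\<And>t. t \<ge> T0 \<Longrightarrow> dist (h t) 0 < c * e / 2"
    unfolding eventually_at_top_linorder by blast
  have T0: "h t < c * e / 2" if "t \<ge> T0" for t
    using T0_dist[OF that] by (auto simp: dist_real_def)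
  define T where "T = max T0 1"
  have T: "T > 0" "T \<ge> T0" unfolding T_def by auto
  define \<phi> where "\<phi> t = exp (c * t) * (u t - e / 2)" for t
  have mono: "\<phi> t \<le> \<phi> T" if t: "t \<ge> T" for t
  proof (rule DERIV_nonpos_imp_nonincreasing[OF t])
    fix x assume x: "T \<le> x" "x \<le> t"
    have "x > 0" using x T by linarith
    then obtain u' where u': "(u has_real_derivative u') (at x)" "u' \<le> - c * u x + h x"
      using der by blast
    have D: "(\<phi> has_real_derivative exp (c * x) * (c * (u x - e / 2) + u')) (at x)"
      unfolding \<phi>_def by (auto intro!: derivative_eq_intros u'(1) simp: algebra_simps)
    have "c * (u x - e / 2) + u' \<le> 0" using u'(2) T0[of x] x T by (simp add: algebra_simps)
    then show "\<exists>y. (\<phi> has_real_derivative y) (at x) \<and> y \<le> 0"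
      using D by (blast intro: mult_nonneg_nonpos less_imp_le[OF exp_gt_zero])
  qed
  have "((\<lambda>t. exp (c * (T - t)) * \<bar>u T\<bar>) \<longlongrightarrow> 0) at_top"
    using c by real_asymp
  then have "eventually (\<lambda>t. exp (c * (T - t)) * \<bar>u T\<bar> < e / 2) at_top"
    using e by (auto simp: dist_real_def dest: tendstoD[of _ 0 _ "e/2"] elim: eventually_mono)
  then show "eventually (\<lambda>t. dist (u t) 0 < e) at_top"
    using eventually_ge_at_top[of T]
  proof eventually_elim
    case (elim t)
    have "exp (c * t) * (u t - e / 2) \<le> exp (c * T) * (u T - e / 2)"
      using mono[OF elim(2)] unfolding \<phi>_def .
    then have "u t - e / 2 \<le> exp (c * T) * (u T - e / 2) / exp (c * t)"
      by (simp add: field_simps)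
    also have "\<dots> = exp (c * (T - t)) * (u T - e / 2)"
      by (simp add: right_diff_distrib exp_diff diff_divide_distrib)
    also have "\<dots> \<le> exp (c * (T - t)) * \<bar>u T\<bar>"
      using e by (intro mult_left_mono) auto
    finally have "u t < e" using elim(1) by linarith
    moreover have "u t \<ge> 0" using u_nonneg T elim(2) by auto
    ultimately show ?case by (simp add: dist_real_def)
  qed
qed

text \<open>For \<open>y' = a y + g\<close> the function \<open>|y|\<^sup>2\<close> satisfies
  \<open>(|y|\<^sup>2)' \<le> Re a |y|\<^sup>2 + |g|\<^sup>2 / (- Re a)\<close> by AM-GM.\<close>

lemma scalar_ode_tendsto_zero:
  fixes y g :: "real \<Rightarrow> complex" and a :: complex
  assumes a: "Re a < 0" and g: "(g \<longlongrightarrow> 0) at_top"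
    and der: "\<And>t. t > 0 \<Longrightarrow> (y has_vector_derivative (a * y t + g t)) (at t)"
  shows "(y \<longlongrightarrow> 0) at_top"
proof -
  define c where "c = - Re a"
  have c: "c > 0" using a unfolding c_def by auto
  define u where "u t = (Re (y t))\<^sup>2 + (Im (y t))\<^sup>2" for t
  define h where "h t = (cmod (g t))\<^sup>2 / c" for t
  have u_norm: "u t = (cmod (y t))\<^sup>2" for t unfolding u_def cmod_def by simp
  have "(u \<longlongrightarrow> 0) at_top"
  proof (rule tendsto_zero_of_deriv_le[OF c])
    show "u t \<ge> 0" for t unfolding u_def by simp
    have "((\<lambda>t. (cmod (g t))\<^sup>2 / c) \<longlongrightarrow> (cmod 0)\<^sup>2 / c) at_top"
      using c by (intro tendsto_intros g) auto
    then show "(h \<longlongrightarrow> 0) at_top" unfolding h_def by simp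
    fix t :: real assume t: "t > 0"
    let ?v = "a * y t + g t"
    have dRe: "((\<lambda>s. Re (y s)) has_real_derivative Re ?v) (at t)"
      unfolding has_real_derivative_iff_has_vector_derivative
      using bounded_linear.has_vector_derivative[OF bounded_linear_Re der[OF t]] .
    have dIm: "((\<lambda>s. Im (y s)) has_real_derivative Im ?v) (at t)"
      unfolding has_real_derivative_iff_has_vector_derivative
      using bounded_linear.has_vector_derivative[OF bounded_linear_Im der[OF t]] .
    have D: "(u has_real_derivative (2 * (Re (y t) * Re ?v + Im (y t) * Im ?v))) (at t)"
      unfolding u_def
      by (rule DERIV_cong[OF DERIV_add[OF DERIV_power[OF dRe, of 2] DERIV_power[OF dIm, of 2]]])
        (simp add: algebra_simps)
    have lin: "Re (y t) * Re (a * y t) + Im (y t) * Im (a * y t) = Re a * u t"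
      unfolding u_def by (simp add: algebra_simps power2_eq_square)
    have "Re (y t) * Re (g t) + Im (y t) * Im (g t) = Re (cnj (y t) * g t)" by simp
    also have "\<dots> \<le> cmod (y t) * cmod (g t)"
      using complex_Re_le_cmod[of "cnj (y t) * g t"] by (simp add: norm_mult)
    finally have cs: "Re (y t) * Re (g t) + Im (y t) * Im (g t) \<le> cmod (y t) * cmod (g t)" .
    have "0 \<le> (c * cmod (y t) - cmod (g t))\<^sup>2" by simp
    then have "2 * c * (cmod (y t) * cmod (g t)) \<le> c * (c * (cmod (y t))\<^sup>2) + (cmod (g t))\<^sup>2"
      by (simp add: power2_eq_square algebra_simps)
    then have "2 * (cmod (y t) * cmod (g t)) \<le> (c * (c * (cmod (y t))\<^sup>2) + (cmod (g t))\<^sup>2) / c"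
      using c by (simp add: field_simps)
    also have "\<dots> = c * u t + h t" unfolding u_norm h_def using c by (simp add: field_simps)
    finally have amgm: "2 * (cmod (y t) * cmod (g t)) \<le> c * u t + h t" .
    have "2 * (Re (y t) * Re ?v + Im (y t) * Im ?v)
        = 2 * (Re a * u t) + 2 * (Re (y t) * Re (g t) + Im (y t) * Im (g t))"
      using lin by (simp add: algebra_simps)
    also have "\<dots> \<le> 2 * (Re a * u t) + (c * u t + h t)"
      by (rule add_left_mono, rule order_trans[OF _ amgm]) (use cs in simp)
    also have "\<dots> = - c * u t + h t" unfolding c_def by (simp add: algebra_simps)
    finally show "\<exists>u'. (u has_real_derivative u') (at t) \<and> u' \<le> - c * u t + h t"
      using D by blast
  qed
  then have "((\<lambda>t. sqrt (u t)) \<longlongrightarrow> sqrt 0) at_top" by (intro tendsto_intros)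
  then have "((\<lambda>t. norm (y t)) \<longlongrightarrow> 0) at_top" unfolding u_norm by simp
  then show ?thesis using tendsto_norm_zero_iff by blast
qed


lemma index_mult_mat_sum:
  assumes "A \<in> carrier_mat n k" "B \<in> carrier_mat k m" "i < n" "j < m"
  shows "(A * B) $$ (i,j) = (\<Sum>l<k. A $$ (i,l) * B $$ (l,j))"
  using assms by (simp add: index_mult_mat scalar_prod_def atLeast0LessThan row_def col_def)

lemma sum_mult_sum_swap:
  fixes a :: "nat \<Rightarrow> 'a::comm_ring_1"
  shows "(\<Sum>k<K. a k * (\<Sum>l<L. b k l * c l)) = (\<Sum>l<L. (\<Sum>k<K. a k * b k l) * c l)"
proof -
  have "(\<Sum>k<K. a k * (\<Sum>l<L. b k l * c l)) = (\<Sum>k<K. \<Sum>l<L. a k * b k l * c l)"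
    by (simp add: sum_distrib_left mult.assoc)
  also have "\<dots> = (\<Sum>l<L. \<Sum>k<K. a k * b k l * c l)" by (rule sum.swap)
  also have "\<dots> = (\<Sum>l<L. (\<Sum>k<K. a k * b k l) * c l)" by (simp add: sum_distrib_right)
  finally show ?thesis .
qed

lemma sum_mult_sum_commute:
  fixes a :: "nat \<Rightarrow> 'a::comm_ring_1"
  shows "(\<Sum>l<K. a l * (\<Sum>j<N. b j * v l j)) = (\<Sum>j<N. b j * (\<Sum>l<K. a l * v l j))"
proof -
  have "(\<Sum>l<K. a l * (\<Sum>j<N. b j * v l j)) = (\<Sum>l<K. \<Sum>j<N. b j * (a l * v l j))"
    by (simp add: sum_distrib_left mult.left_commute)
  also have "\<dots> = (\<Sum>j<N. \<Sum>l<K. b j * (a l * v l j))" by (rule sum.swap)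
  also have "\<dots> = (\<Sum>j<N. b j * (\<Sum>l<K. a l * v l j))" by (simp add: sum_distrib_left)
  finally show ?thesis .
qed

lemma mult_mat_sum_intertwine:
  fixes Q F T :: "'a::comm_ring_1 mat"
  assumes Q: "Q \<in> carrier_mat K K" and F: "F \<in> carrier_mat K K" and T: "T \<in> carrier_mat K K"
    and QF: "Q * F = T * Q" and i: "i < K"
  shows "(\<Sum>k<K. Q $$ (i,k) * (\<Sum>l<K. F $$ (k,l) * x l))
       = (\<Sum>j<K. T $$ (i,j) * (\<Sum>l<K. Q $$ (j,l) * x l))"
proof -
  have "(\<Sum>k<K. Q $$ (i,k) * (\<Sum>l<K. F $$ (k,l) * x l))
      = (\<Sum>l<K. (\<Sum>k<K. Q $$ (i,k) * F $$ (k,l)) * x l)"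
    by (rule sum_mult_sum_swap)
  also have "\<dots> = (\<Sum>l<K. (\<Sum>j<K. T $$ (i,j) * Q $$ (j,l)) * x l)"
    using index_mult_mat_sum[OF Q F i] index_mult_mat_sum[OF T Q i] QF by simp
  also have "\<dots> = (\<Sum>j<K. T $$ (i,j) * (\<Sum>l<K. Q $$ (j,l) * x l))"
    by (rule sum_mult_sum_swap[symmetric])
  finally show ?thesis .
qed

lemma mult_mat_sum_inverse:
  fixes P Q :: "'a::comm_ring_1 mat"
  assumes P: "P \<in> carrier_mat K K" and Q: "Q \<in> carrier_mat K K"
    and PQ: "P * Q = 1\<^sub>m K" and k: "k < K"
  shows "(\<Sum>i<K. P $$ (k,i) * (\<Sum>l<K. Q $$ (i,l) * x l)) = x k"
proof -
  have "(\<Sum>i<K. P $$ (k,i) * (\<Sum>l<K. Q $$ (i,l) * x l))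
      = (\<Sum>l<K. (\<Sum>i<K. P $$ (k,i) * Q $$ (i,l)) * x l)"
    by (rule sum_mult_sum_swap)
  also have "\<dots> = (\<Sum>l<K. (P * Q) $$ (k,l) * x l)"
    using index_mult_mat_sum[OF P Q k] by simp
  also have "\<dots> = (\<Sum>l<K. if k = l then x l else 0)"
    unfolding PQ using k by (intro sum.cong) auto
  also have "\<dots> = x k" using k by (simp add: sum.delta)
  finally show ?thesis .
qed

lemma schur_triangularization:
  fixes F :: "complex mat"
  assumes F: "F \<in> carrier_mat K K"
  obtains T P Q where "T \<in> carrier_mat K K" "P \<in> carrier_mat K K" "Q \<in> carrier_mat K K"
    "P * Q = 1\<^sub>m K" "Q * F = T * Q" "upper_triangular T"
    "\<And>i. i < K \<Longrightarrow> eigenvalue F (T $$ (i,i))"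
proof -
  obtain es where cp: "char_poly F = (\<Prod>a\<leftarrow>es. [:- a, 1:])"
    using char_poly_factorized[OF F] by auto
  obtain T P Q where sd: "schur_decomposition F es = (T,P,Q)"
    by (cases "schur_decomposition F es") auto
  from schur_decomposition[OF F cp sd] have sim: "similar_mat_wit F T P Q"
    and ut: "upper_triangular T" and dg: "diag_mat T = es" by auto
  from sim F have T: "T \<in> carrier_mat K K" and P: "P \<in> carrier_mat K K"
    and Q: "Q \<in> carrier_mat K K" and PQ: "P * Q = 1\<^sub>m K" and QP: "Q * P = 1\<^sub>m K"
    and FPTQ: "F = P * T * Q"
    unfolding similar_mat_wit_def Let_def by auto
  have "Q * F = (Q * P) * T * Q"
    unfolding FPTQ using P T Q by (simp add: assoc_mult_mat[of _ K K _ K _ K])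
  then have QF: "Q * F = T * Q" using QP T Q by simp
  have "eigenvalue F (T $$ (i,i))" if i: "i < K" for i
  proof -
    have "T $$ (i,i) \<in> set es" using i T unfolding dg[symmetric] diag_mat_def by auto
    then have "poly (char_poly F) (T $$ (i,i)) = 0" unfolding cp by (rule linear_poly_root)
    then show ?thesis using eigenvalue_root_char_poly[OF F] by auto
  qed
  with that T P Q PQ QF ut show ?thesis by blast
qed

text \<open>In Schur coordinates the system is triangular, so the coordinates tend to zero one
  after another, from the last to the first, by \<open>scalar_ode_tendsto_zero\<close>.\<close>

lemma hurwitz_ode_tendsto_zero:
  fixes F :: "complex mat" and x :: "real \<Rightarrow> nat \<Rightarrow> complex"
  assumes F: "F \<in> carrier_mat K K"
    and hurwitz: "\<And>\<mu>. eigenvalue F \<mu> \<Longrightarrow> Re \<mu> < 0"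
    and der: "\<And>t k. t > 0 \<Longrightarrow> k < K \<Longrightarrow>
       ((\<lambda>s. x s k) has_vector_derivative (\<Sum>l<K. F $$ (k,l) * x t l)) (at t)"
    and k: "k < K"
  shows "((\<lambda>t. x t k) \<longlongrightarrow> 0) at_top"
proof -
  obtain T P Q where T: "T \<in> carrier_mat K K" and P: "P \<in> carrier_mat K K"
    and Q: "Q \<in> carrier_mat K K" and PQ: "P * Q = 1\<^sub>m K" and QF: "Q * F = T * Q"
    and ut: "upper_triangular T" and eig: "\<And>i. i < K \<Longrightarrow> eigenvalue F (T $$ (i,i))"
    using schur_triangularization[OF F] by blast
  define y where "y t i = (\<Sum>k<K. Q $$ (i,k) * x t k)" for t i
  have dy: "((\<lambda>s. y s i) has_vector_derivative
      T $$ (i,i) * y t i + (\<Sum>j\<in>{Suc i..<K}. T $$ (i,j) * y t j)) (at t)"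
    if t: "t > 0" and i: "i < K" for t i
  proof -
    have "((\<lambda>s. y s i) has_vector_derivative
        (\<Sum>k<K. Q $$ (i,k) * (\<Sum>l<K. F $$ (k,l) * x t l))) (at t)"
      unfolding y_def
      by (intro has_vector_derivative_sum has_vector_derivative_mult_right der[OF t]) auto
    moreover have "(\<Sum>k<K. Q $$ (i,k) * (\<Sum>l<K. F $$ (k,l) * x t l)) = (\<Sum>j<K. T $$ (i,j) * y t j)"
      unfolding y_def by (rule mult_mat_sum_intertwine[OF Q F T QF i])
    moreover have "(\<Sum>j<K. T $$ (i,j) * y t j) = (\<Sum>j\<in>{i..<K}. T $$ (i,j) * y t j)"
      using ut T i unfolding upper_triangular_def by (intro sum.mono_neutral_right) auto
    ultimately show ?thesis using i by (simp add: sum.atLeast_Suc_lessThan)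
  qed
  have ylim: "((\<lambda>t. y t i) \<longlongrightarrow> 0) at_top" if "i < K" for i
    using that
  proof (induct i rule: measure_induct_rule[of "\<lambda>i. K - i"])
    case (less i)
    have "((\<lambda>t. \<Sum>j\<in>{Suc i..<K}. T $$ (i,j) * y t j) \<longlongrightarrow> 0) at_top"
      using less by (intro tendsto_null_sum tendsto_mult_right_zero) auto
    from scalar_ode_tendsto_zero[OF hurwitz[OF eig[OF less(2)]] this dy[OF _ less(2)]]
    show ?case .
  qed
  have "((\<lambda>t. \<Sum>i<K. P $$ (k,i) * y t i) \<longlongrightarrow> 0) at_top"
    by (intro tendsto_null_sum tendsto_mult_right_zero ylim) auto
  then show ?thesis unfolding y_def mult_mat_sum_inverse[OF P Q PQ k] .
qed

section \<open>Port-Hamiltonian systems under output feedback\<close>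

definition quad_form :: "nat \<Rightarrow> real mat \<Rightarrow> (nat \<Rightarrow> real) \<Rightarrow> real" where
  "quad_form n X a = (\<Sum>i<n. a i * (\<Sum>k<n. X $$ (i,k) * a k))"

lemma quad_form_scalar_prod: "X \<in> carrier_mat n n \<Longrightarrow> scalar_prod (Matrix.vec n a) (X *\<^sub>v Matrix.vec n a) = quad_form n X a"
  unfolding quad_form_def by (simp add: scalar_prod_def atLeast0LessThan row_def)

lemma sym_mat_entry:
  assumes "X \<in> carrier_mat n n" "sym_mat X" "i < n" "k < n"
  shows "X $$ (i,k) = X $$ (k,i)"
proof -
  have "transpose_mat X $$ (i,k) = X $$ (k,i)" using assms(1,3,4) by simp
  then show ?thesis using assms(2) unfolding sym_mat_def by simp
qed

lemma skew_mat_entry: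
  assumes "X \<in> carrier_mat n n" "skew_mat X" "i < n" "k < n"
  shows "X $$ (i,k) = - X $$ (k,i)"
proof -
  have "transpose_mat X $$ (i,k) = X $$ (k,i)" using assms(1,3,4) by simp
  moreover have "(- X) $$ (i,k) = - X $$ (i,k)" using assms(1,3,4) by simp
  ultimately show ?thesis using assms(2) unfolding skew_mat_def by simp
qed

lemma sum_antisym_zero:
  fixes f :: "nat \<Rightarrow> nat \<Rightarrow> real"
  assumes "\<And>i k. i < n \<Longrightarrow> k < n \<Longrightarrow> f i k = - f k i"
  shows "(\<Sum>i<n. \<Sum>k<n. f i k) = 0"
proof -
  have "(\<Sum>i<n. \<Sum>k<n. f i k) = (\<Sum>k<n. \<Sum>i<n. f i k)" by (rule sum.swap)
  also have "\<dots> = (\<Sum>k<n. \<Sum>i<n. - f k i)"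
    by (rule sum.cong[OF refl], rule sum.cong[OF refl]) (metis assms lessThan_iff)
  also have "\<dots> = - (\<Sum>i<n. \<Sum>k<n. f i k)" by (simp add: sum_negf)
  finally show ?thesis by linarith
qed

lemma pos_semidef_quad_form_nonneg: assumes "pos_semidef n R" shows "quad_form n R a \<ge> 0"
proof -
  have R: "R \<in> carrier_mat n n" using assms unfolding pos_semidef_def by auto
  have "Matrix.vec n a \<in> carrier_vec n" by simp
  then have "0 \<le> scalar_prod (Matrix.vec n a) (R *\<^sub>v Matrix.vec n a)"
    using assms unfolding pos_semidef_def by blast
  then show ?thesis using quad_form_scalar_prod[OF R] by simp
qed

lemma pos_semidef_quad_form_zero:
  assumes R: "pos_semidef n R" and z: "quad_form n R a = 0" and i: "i < n"
  shows "(\<Sum>k<n. R $$ (i,k) * a k) = 0"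
proof -
  have Rc: "R \<in> carrier_mat n n" and Rs: "sym_mat R" using R unfolding pos_semidef_def by auto
  define g where "g i = (\<Sum>k<n. R $$ (i,k) * a k)" for i
  define S where "S = (\<Sum>i<n. g i * g i)"
  define P where "P = quad_form n R g"
  have P: "P \<ge> 0" unfolding P_def by (rule pos_semidef_quad_form_nonneg[OF R])
  have cross: "(\<Sum>i<n. a i * (\<Sum>k<n. R $$ (i,k) * g k)) = S"
  proof -
    have "(\<Sum>i<n. a i * (\<Sum>k<n. R $$ (i,k) * g k)) = (\<Sum>k<n. (\<Sum>i<n. a i * R $$ (i,k)) * g k)"
      by (rule sum_mult_sum_swap)
    also have "\<dots> = (\<Sum>k<n. g k * g k)"
    proof (rule sum.cong[OF refl])
      fix k assume k: "k \<in> {..<n}"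
      have "(\<Sum>i<n. a i * R $$ (i,k)) = g k"
        unfolding g_def using sym_mat_entry[OF Rc Rs] k by (auto intro!: sum.cong simp: mult.commute)
      then show "(\<Sum>i<n. a i * R $$ (i,k)) * g k = g k * g k" by simp
    qed
    finally show ?thesis unfolding S_def .
  qed
  have inner: "(\<Sum>k<n. R $$ (i,k) * (a k + t * g k)) = g i + t * (\<Sum>k<n. R $$ (i,k) * g k)"
    for i t unfolding g_def[of i]
    by (simp add: distrib_left sum.distrib sum_distrib_left mult.left_commute)
  have expand: "quad_form n R (\<lambda>k. a k + t * g k) = quad_form n R a + 2 * t * S + t\<^sup>2 * P" for t
  proof -
    have "quad_form n R (\<lambda>k. a k + t * g k) = (\<Sum>i<n. (a i + t * g i) * (g i + t * (\<Sum>k<n. R $$ (i,k) * g k)))"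
      unfolding quad_form_def inner ..
    also have "\<dots> = (\<Sum>i<n. a i * g i) + t * (\<Sum>i<n. a i * (\<Sum>k<n. R $$ (i,k) * g k))
        + t * (\<Sum>i<n. g i * g i) + t\<^sup>2 * (\<Sum>i<n. g i * (\<Sum>k<n. R $$ (i,k) * g k))"
      by (simp add: algebra_simps sum.distrib sum_distrib_left power2_eq_square)
    also have "(\<Sum>i<n. a i * g i) = quad_form n R a" unfolding quad_form_def g_def ..
    finally show ?thesis using cross unfolding S_def P_def quad_form_def by simp
  qed
  define t where "t = - S / (P + 1)"
  have P1: "P + 1 \<noteq> 0" using P by linarith
  have tu: "t * (P + 1) = - S" unfolding t_def using P1 by simp
  have "0 \<le> quad_form n R (\<lambda>k. a k + t * g k)" by (rule pos_semidef_quad_form_nonneg[OF R])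
  then have "0 \<le> 2 * t * S + t\<^sup>2 * P" using expand z by simp
  then have "0 \<le> (2 * t * S + t\<^sup>2 * P) * (P + 1)\<^sup>2" using P by simp
  also have "\<dots> = 2 * S * (t * (P + 1)) * (P + 1) + (t * (P + 1))\<^sup>2 * P"
    by (simp add: power2_eq_square algebra_simps)
  also have "\<dots> = - S\<^sup>2 * (P + 2)"
    unfolding tu by (simp add: power2_eq_square algebra_simps)
  finally have "S\<^sup>2 * (P + 2) \<le> 0" by simp
  then have "S\<^sup>2 \<le> 0" using P by (simp add: mult_le_0_iff)
  then have S0: "S = 0" by simp
  have "\<forall>i\<in>{..<n}. g i * g i = 0"
    using S0 unfolding S_def by (subst sum_nonneg_eq_0_iff[symmetric]) auto
  then show ?thesis using i unfolding g_def by auto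
qed

lemma Re_cnj_bilinear:
  fixes u v :: "nat \<Rightarrow> complex" and X :: "nat \<Rightarrow> nat \<Rightarrow> real"
  shows "Re (\<Sum>i<n. cnj (u i) * (\<Sum>k<n. of_real (X i k) * v k))
       = (\<Sum>i<n. \<Sum>k<n. X i k * (Re (u i) * Re (v k) + Im (u i) * Im (v k)))"
  unfolding Re_sum sum_distrib_left
  by (rule sum.cong[OF refl], rule sum.cong[OF refl]) (simp add: algebra_simps)

lemma Re_cnj_quad_form:
  fixes u :: "nat \<Rightarrow> complex"
  shows "Re (\<Sum>i<n. cnj (u i) * (\<Sum>k<n. of_real (X $$ (i,k)) * u k))
       = quad_form n X (\<lambda>k. Re (u k)) + quad_form n X (\<lambda>k. Im (u k))"
proof -
  have e: "Re (\<Sum>i<n. cnj (u i) * (\<Sum>k<n. of_real (X $$ (i,k)) * u k))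
     = (\<Sum>i<n. \<Sum>k<n. X $$ (i,k) * (Re (u i) * Re (u k) + Im (u i) * Im (u k)))"
    using Re_cnj_bilinear[where X="\<lambda>i k. X $$ (i,k)" and u=u and v=u and n=n] by simp
  show ?thesis unfolding e
    by (unfold quad_form_def sum_distrib_left sum.distrib[symmetric], rule sum.cong[OF refl],
        rule sum.cong[OF refl]) (simp add: algebra_simps)
qed


lemma pos_def_imp_pos_semidef:
  assumes "pos_def n Q" shows "pos_semidef n Q"
proof -
  have "0 \<le> x \<bullet> (Q *\<^sub>v x)" if x: "x \<in> carrier_vec n" for x
    using assms x by (cases "x = 0\<^sub>v n") (auto simp: pos_def_def intro: less_imp_le)
  then show ?thesis using assms unfolding pos_semidef_def pos_def_def by auto
qed

lemma skew_cnj_quad_Re_zero: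
  fixes y :: "nat \<Rightarrow> complex"
  assumes Jc: "J \<in> carrier_mat n n" and Js: "skew_mat J"
  shows "Re (\<Sum>i<n. cnj (y i) * (\<Sum>k<n. of_real (J $$ (i,k)) * y k)) = 0"
proof -
  have "Re (\<Sum>i<n. cnj (y i) * (\<Sum>k<n. of_real (J $$ (i,k)) * y k))
      = (\<Sum>i<n. \<Sum>k<n. J $$ (i,k) * (Re (y i) * Re (y k) + Im (y i) * Im (y k)))"
    by (rule Re_cnj_bilinear)
  also have "\<dots> = 0"
  proof (rule sum_antisym_zero)
    fix i k assume "i < n" "k < n"
    then have "J $$ (i,k) = - J $$ (k,i)" by (rule skew_mat_entry[OF Jc Js])
    then show "J $$ (i,k) * (Re (y i) * Re (y k) + Im (y i) * Im (y k))
       = - (J $$ (k,i) * (Re (y k) * Re (y i) + Im (y k) * Im (y i)))"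
      by (simp add: algebra_simps)
  qed
  finally show ?thesis .
qed

lemma sym_mat_cnj_quad_swap:
  fixes z :: "nat \<Rightarrow> complex"
  assumes Qc: "Q \<in> carrier_mat n n" and Qs: "sym_mat Q"
  shows "(\<Sum>i<n. cnj (\<Sum>j<n. of_real (Q $$ (i,j)) * z j) * z i)
       = (\<Sum>i<n. cnj (z i) * (\<Sum>k<n. of_real (Q $$ (i,k)) * z k))"
proof -
  have "(\<Sum>i<n. cnj (\<Sum>j<n. of_real (Q $$ (i,j)) * z j) * z i)
      = (\<Sum>i<n. \<Sum>j<n. of_real (Q $$ (i,j)) * cnj (z j) * z i)"
    by (simp add: cnj_sum sum_distrib_right)
  also have "\<dots> = (\<Sum>i<n. \<Sum>j<n. of_real (Q $$ (j,i)) * cnj (z j) * z i)"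
    using sym_mat_entry[OF Qc Qs] by (intro sum.cong refl) auto
  also have "\<dots> = (\<Sum>j<n. \<Sum>i<n. of_real (Q $$ (j,i)) * cnj (z j) * z i)" by (rule sum.swap)
  also have "\<dots> = (\<Sum>i<n. cnj (z i) * (\<Sum>k<n. of_real (Q $$ (i,k)) * z k))"
    by (simp add: sum_distrib_left mult.commute mult.left_commute)
  finally show ?thesis .
qed

lemma cnj_quad_gram:
  fixes y :: "nat \<Rightarrow> complex" and B :: "real mat"
  shows "(\<Sum>i<n. cnj (y i) * (\<Sum>l<m. of_real (B $$ (i,l)) * (\<Sum>k<n. of_real (B $$ (k,l)) * y k)))
       = of_real (\<Sum>l<m. (cmod (\<Sum>k<n. of_real (B $$ (k,l)) * y k))\<^sup>2)"
proof -
  define s where "s l = (\<Sum>k<n. of_real (B $$ (k,l)) * y k)" for l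
  have "(\<Sum>i<n. cnj (y i) * (\<Sum>l<m. of_real (B $$ (i,l)) * s l))
      = (\<Sum>l<m. (\<Sum>i<n. cnj (y i) * of_real (B $$ (i,l))) * s l)"
    by (rule sum_mult_sum_swap)
  also have "\<dots> = (\<Sum>l<m. cnj (s l) * s l)"
    unfolding s_def by (simp add: cnj_sum mult.commute)
  also have "\<dots> = of_real (\<Sum>l<m. (cmod (s l))\<^sup>2)" unfolding of_real_sum
    by (rule sum.cong[OF refl]) (subst complex_norm_square, simp add: mult.commute)
  finally show ?thesis unfolding s_def .
qed

lemma pos_semidef_cnj_quad:
  fixes z :: "nat \<Rightarrow> complex"
  assumes Q: "pos_semidef n Q"
  shows "Im (\<Sum>i<n. cnj (z i) * (\<Sum>k<n. of_real (Q $$ (i,k)) * z k)) = 0"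
    and "Re (\<Sum>i<n. cnj (z i) * (\<Sum>k<n. of_real (Q $$ (i,k)) * z k)) \<ge> 0"
proof -
  have Qc: "Q \<in> carrier_mat n n" and Qs: "sym_mat Q" using Q unfolding pos_semidef_def by auto
  have "Im (\<Sum>i<n. cnj (z i) * (\<Sum>k<n. of_real (Q $$ (i,k)) * z k))
      = (\<Sum>i<n. \<Sum>k<n. Q $$ (i,k) * (Re (z i) * Im (z k) - Im (z i) * Re (z k)))"
    by (simp add: Im_sum sum_distrib_left algebra_simps)
  also have "\<dots> = 0"
  proof (rule sum_antisym_zero)
    fix i k assume "i < n" "k < n"
    then have "Q $$ (i,k) = Q $$ (k,i)" by (rule sym_mat_entry[OF Qc Qs])
    then show "Q $$ (i,k) * (Re (z i) * Im (z k) - Im (z i) * Re (z k))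
       = - (Q $$ (k,i) * (Re (z k) * Im (z i) - Im (z k) * Re (z i)))"
      by (simp add: algebra_simps)
  qed
  finally show "Im (\<Sum>i<n. cnj (z i) * (\<Sum>k<n. of_real (Q $$ (i,k)) * z k)) = 0" .
  show "Re (\<Sum>i<n. cnj (z i) * (\<Sum>k<n. of_real (Q $$ (i,k)) * z k)) \<ge> 0"
    unfolding Re_cnj_quad_form using pos_semidef_quad_form_nonneg[OF Q] by (simp add: add_nonneg_nonneg)
qed

text \<open>A complex eigenvector of \<open>A\<close> in the kernel of \<open>C\<close> has real and imaginary parts
  spanning an \<open>A\<close>-invariant subspace of the unobservable subspace.\<close>

lemma observable_eigenvector_zero:
  fixes A C :: "real mat" and z :: "nat \<Rightarrow> complex"
  assumes Ac: "A \<in> carrier_mat n n" and Cc: "C \<in> carrier_mat m n" and obs: "observable n A C"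
    and Az: "\<And>i. i < n \<Longrightarrow> (\<Sum>j<n. of_real (A $$ (i,j)) * z j) = mu * z i"
    and Cz: "\<And>l. l < m \<Longrightarrow> (\<Sum>j<n. of_real (C $$ (l,j)) * z j) = 0"
    and i0: "i0 < n"
  shows "z i0 = 0"
proof -
  define cv where "cv = Matrix.vec n (\<lambda>j. Re (z j))"
  define dv where "dv = Matrix.vec n (\<lambda>j. Im (z j))"
  have cvc: "cv \<in> carrier_vec n" and dvc: "dv \<in> carrier_vec n" unfolding cv_def dv_def by auto
  have mv: "(X *\<^sub>v Matrix.vec n f) $ i = (\<Sum>j<n. X $$ (i,j) * f j)"
    if "X \<in> carrier_mat k n" "i < k" for X :: "real mat" and f i k
    using that by (simp add: scalar_prod_def atLeast0LessThan row_def)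
  have Acv: "A *\<^sub>v cv = Re mu \<cdot>\<^sub>v cv + (- Im mu) \<cdot>\<^sub>v dv"
  proof (rule eq_vecI)
    fix i assume "i < dim_vec (Re mu \<cdot>\<^sub>v cv + (- Im mu) \<cdot>\<^sub>v dv)"
    then have i: "i < n" using dvc by simp
    have "(A *\<^sub>v cv) $ i = Re (\<Sum>j<n. of_real (A $$ (i,j)) * z j)"
      unfolding cv_def mv[OF Ac i] by (simp add: Re_sum)
    also have "\<dots> = Re mu * Re (z i) - Im mu * Im (z i)" using Az[OF i] by simp
    finally show "(A *\<^sub>v cv) $ i = (Re mu \<cdot>\<^sub>v cv + (- Im mu) \<cdot>\<^sub>v dv) $ i"
      using i unfolding cv_def dv_def by simp
  qed (use Ac dvc in simp)
  have Adv: "A *\<^sub>v dv = Im mu \<cdot>\<^sub>v cv + Re mu \<cdot>\<^sub>v dv"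
  proof (rule eq_vecI)
    fix i assume "i < dim_vec (Im mu \<cdot>\<^sub>v cv + Re mu \<cdot>\<^sub>v dv)"
    then have i: "i < n" using dvc by simp
    have "(A *\<^sub>v dv) $ i = Im (\<Sum>j<n. of_real (A $$ (i,j)) * z j)"
      unfolding dv_def mv[OF Ac i] by (simp add: Im_sum)
    also have "\<dots> = Im mu * Re (z i) + Re mu * Im (z i)" using Az[OF i] by simp
    finally show "(A *\<^sub>v dv) $ i = (Im mu \<cdot>\<^sub>v cv + Re mu \<cdot>\<^sub>v dv) $ i"
      using i unfolding cv_def dv_def by simp
  qed (use Ac dvc in simp)
  have Ccv: "C *\<^sub>v cv = 0\<^sub>v m"
  proof (rule eq_vecI)
    fix l assume "l < dim_vec (0\<^sub>v m :: real Matrix.vec)"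
    then have l: "l < m" by simp
    have "(C *\<^sub>v cv) $ l = Re (\<Sum>j<n. of_real (C $$ (l,j)) * z j)"
      unfolding cv_def mv[OF Cc l] by (simp add: Re_sum)
    then show "(C *\<^sub>v cv) $ l = 0\<^sub>v m $ l" using Cz[OF l] l by simp
  qed (use Cc in simp)
  have Cdv: "C *\<^sub>v dv = 0\<^sub>v m"
  proof (rule eq_vecI)
    fix l assume "l < dim_vec (0\<^sub>v m :: real Matrix.vec)"
    then have l: "l < m" by simp
    have "(C *\<^sub>v dv) $ l = Im (\<Sum>j<n. of_real (C $$ (l,j)) * z j)"
      unfolding dv_def mv[OF Cc l] by (simp add: Im_sum)
    then show "(C *\<^sub>v dv) $ l = 0\<^sub>v m $ l" using Cz[OF l] l by simp
  qed (use Cc in simp)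
  have "(C * A ^\<^sub>m k) *\<^sub>v cv = 0\<^sub>v m \<and> (C * A ^\<^sub>m k) *\<^sub>v dv = 0\<^sub>v m" for k
  proof (induct k)
    case 0
    show ?case using Ccv Cdv Cc Ac by simp
  next
    case (Suc k)
    have CPk: "C * A ^\<^sub>m k \<in> carrier_mat m n" using Cc Ac by simp
    have eqm: "C * A ^\<^sub>m Suc k = (C * A ^\<^sub>m k) * A"
      using Cc Ac by (simp add: assoc_mult_mat[of C m n _ n A n])
    have "(C * A ^\<^sub>m Suc k) *\<^sub>v cv
        = Re mu \<cdot>\<^sub>v ((C * A ^\<^sub>m k) *\<^sub>v cv) + (- Im mu) \<cdot>\<^sub>v ((C * A ^\<^sub>m k) *\<^sub>v dv)"
      unfolding eqm using CPk Ac cvc dvc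
      by (simp add: assoc_mult_mat_vec Acv mult_add_distrib_mat_vec mult_mat_vec)
    moreover have "(C * A ^\<^sub>m Suc k) *\<^sub>v dv
        = Im mu \<cdot>\<^sub>v ((C * A ^\<^sub>m k) *\<^sub>v cv) + Re mu \<cdot>\<^sub>v ((C * A ^\<^sub>m k) *\<^sub>v dv)"
      unfolding eqm using CPk Ac cvc dvc
      by (simp add: assoc_mult_mat_vec Adv mult_add_distrib_mat_vec mult_mat_vec)
    ultimately show ?case using Suc by (auto intro!: eq_vecI)
  qed
  then have "cv = 0\<^sub>v n" and "dv = 0\<^sub>v n"
    using obs cvc dvc Cc unfolding observable_def by blast+
  then have "Re (z i0) = 0" "Im (z i0) = 0"
    using i0 unfolding cv_def dv_def by (metis index_vec index_zero_vec(1))+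
  then show ?thesis by (simp add: complex_eq_iff)
qed


lemma port_hamiltonian_action:
  fixes z :: "nat \<Rightarrow> complex"
  assumes JR: "J - R \<in> carrier_mat n n" and Q: "Q \<in> carrier_mat n n" and B: "B \<in> carrier_mat n m"
    and A_def: "A = (J - R) * Q" and C_def: "C = transpose_mat B * Q"
  defines "y \<equiv> \<lambda>k. \<Sum>j<n. of_real (Q $$ (k,j)) * z j"
  defines "s \<equiv> \<lambda>l. \<Sum>k<n. of_real (B $$ (k,l)) * y k"
  shows "\<And>i. i < n \<Longrightarrow> (\<Sum>j<n. of_real (A $$ (i,j)) * z j)
          = (\<Sum>k<n. of_real ((J - R) $$ (i,k)) * y k)"
    and "\<And>l. l < m \<Longrightarrow> (\<Sum>j<n. of_real (C $$ (l,j)) * z j) = s l"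
    and "\<And>i. i < n \<Longrightarrow> (\<Sum>j<n. of_real ((B * C) $$ (i,j)) * z j)
          = (\<Sum>l<m. of_real (B $$ (i,l)) * s l)"
proof -
  have BT: "transpose_mat B \<in> carrier_mat m n" using B by simp
  have Cc: "C \<in> carrier_mat m n" unfolding C_def using BT Q by simp
  show "(\<Sum>j<n. of_real (A $$ (i,j)) * z j) = (\<Sum>k<n. of_real ((J - R) $$ (i,k)) * y k)"
    if i: "i < n" for i
  proof -
    have "(\<Sum>j<n. of_real (A $$ (i,j)) * z j)
        = (\<Sum>j<n. (\<Sum>k<n. of_real ((J - R) $$ (i,k)) * of_real (Q $$ (k,j))) * z j)"
      unfolding A_def by (intro sum.cong) (simp_all add: index_mult_mat_sum[OF JR Q i] of_real_sum)
    then show ?thesis unfolding y_def by (simp add: sum_mult_sum_swap)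
  qed
  show Cz: "(\<Sum>j<n. of_real (C $$ (l,j)) * z j) = s l" if l: "l < m" for l
  proof -
    have "(\<Sum>j<n. of_real (C $$ (l,j)) * z j)
        = (\<Sum>j<n. (\<Sum>k<n. of_real (B $$ (k,l)) * of_real (Q $$ (k,j))) * z j)"
      unfolding C_def using l B by (intro sum.cong) (simp_all add: index_mult_mat_sum[OF BT Q l] of_real_sum)
    then show ?thesis unfolding s_def y_def by (simp add: sum_mult_sum_swap)
  qed
  show "(\<Sum>j<n. of_real ((B * C) $$ (i,j)) * z j) = (\<Sum>l<m. of_real (B $$ (i,l)) * s l)"
    if i: "i < n" for i
  proof -
    have "(\<Sum>j<n. of_real ((B * C) $$ (i,j)) * z j)
        = (\<Sum>j<n. (\<Sum>l<m. of_real (B $$ (i,l)) * of_real (C $$ (l,j))) * z j)"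
      by (intro sum.cong) (simp_all add: index_mult_mat_sum[OF B Cc i] of_real_sum)
    also have "\<dots> = (\<Sum>l<m. of_real (B $$ (i,l)) * (\<Sum>j<n. of_real (C $$ (l,j)) * z j))"
      by (rule sum_mult_sum_swap[symmetric])
    finally show ?thesis using Cz by simp
  qed
qed

text \<open>Energy argument with storage \<open>z\<^sup>* Q z\<close>: pairing the eigen-equation with \<open>Q z\<close>, the skew
  part \<open>J\<close> contributes nothing, \<open>R\<close> and the feedback \<open>\<lambda> B B\<^sup>T\<close> are dissipative; so
  \<open>Re \<mu> \<ge> 0\<close> forces \<open>R Q z = 0\<close> and \<open>C z = 0\<close>, and then \<open>z\<close> is an unobservable
  eigenvector of \<open>A\<close>.\<close>

lemma port_hamiltonian_feedback_eigenvalue: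
  fixes Q J R B A C :: "real mat" and z :: "nat \<Rightarrow> complex" and lam mu :: complex
  assumes Q: "pos_def n Q" and Jc: "J \<in> carrier_mat n n" and Js: "skew_mat J"
    and R: "pos_semidef n R"
    and B: "B \<in> carrier_mat n m" and A_def: "A = (J - R) * Q" and C_def: "C = transpose_mat B * Q"
    and obs: "observable n A C"
    and eq: "\<And>i. i < n \<Longrightarrow> (\<Sum>j<n. of_real (A $$ (i,j)) * z j)
                 - lam * (\<Sum>j<n. of_real ((B * C) $$ (i,j)) * z j) = mu * z i"
    and nz: "i0 < n" "z i0 \<noteq> 0"
    and lam: "Re lam > 0"
  shows "Re mu < 0"
proof (rule ccontr)
  assume "\<not> Re mu < 0" then have mu0: "Re mu \<ge> 0" by simp
  have Qc: "Q \<in> carrier_mat n n" and Qs: "sym_mat Q" using Q unfolding pos_def_def by auto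
  have Rc: "R \<in> carrier_mat n n" using R unfolding pos_semidef_def by auto
  have JRc: "J - R \<in> carrier_mat n n" using Jc Rc by (simp add: minus_carrier_mat)
  have Ac: "A \<in> carrier_mat n n" unfolding A_def using JRc Qc by simp
  have Cc: "C \<in> carrier_mat m n" unfolding C_def using B Qc by simp
  define y where "y k = (\<Sum>j<n. of_real (Q $$ (k,j)) * z j)" for k
  define s where "s l = (\<Sum>k<n. of_real (B $$ (k,l)) * y k)" for l
  note action = port_hamiltonian_action[OF JRc Qc B A_def C_def, where z=z, folded y_def, folded s_def]
  define Jy where "Jy i = (\<Sum>k<n. of_real (J $$ (i,k)) * y k)" for i
  define Ry where "Ry i = (\<Sum>k<n. of_real (R $$ (i,k)) * y k)" for i
  define Bs where "Bs i = (\<Sum>l<m. of_real (B $$ (i,l)) * s l)" for i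
  have Az: "(\<Sum>j<n. of_real (A $$ (i,j)) * z j) = Jy i - Ry i" if i: "i < n" for i
    unfolding action(1)[OF i] Jy_def Ry_def using i Jc Rc
    by (simp add: sum_subtractf algebra_simps)
  have E: "Jy i - Ry i - lam * Bs i = mu * z i" if i: "i < n" for i
    using eq[OF i] Az[OF i] action(3)[OF i] unfolding Bs_def by simp
  define Jq where "Jq = (\<Sum>i<n. cnj (y i) * Jy i)"
  define Rq where "Rq = (\<Sum>i<n. cnj (y i) * Ry i)"
  define Bq where "Bq = (\<Sum>i<n. cnj (y i) * Bs i)"
  define Zq where "Zq = (\<Sum>i<n. cnj (y i) * z i)"
  have "(\<Sum>i<n. cnj (y i) * (Jy i - Ry i - lam * Bs i)) = (\<Sum>i<n. cnj (y i) * (mu * z i))"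
    using E by simp
  then have energy: "Jq - Rq - lam * Bq = mu * Zq" unfolding Jq_def Rq_def Bq_def Zq_def
    by (simp add: right_diff_distrib sum_subtractf sum_distrib_left mult.left_commute)
  define \<sigma> where "\<sigma> = (\<Sum>l<m. (cmod (s l))\<^sup>2)"
  have Bq: "Bq = of_real \<sigma>"
    unfolding Bq_def Bs_def \<sigma>_def s_def by (rule cnj_quad_gram)
  define \<rho>a where "\<rho>a = quad_form n R (\<lambda>k. Re (y k))"
  define \<rho>b where "\<rho>b = quad_form n R (\<lambda>k. Im (y k))"
  have ReR: "Re Rq = \<rho>a + \<rho>b" unfolding Rq_def Ry_def \<rho>a_def \<rho>b_def by (rule Re_cnj_quad_form)
  have \<rho>: "\<rho>a \<ge> 0" "\<rho>b \<ge> 0" unfolding \<rho>a_def \<rho>b_def using pos_semidef_quad_form_nonneg[OF R] by auto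
  have Zq_eq: "Zq = (\<Sum>i<n. cnj (z i) * (\<Sum>k<n. of_real (Q $$ (i,k)) * z k))"
    unfolding Zq_def y_def by (rule sym_mat_cnj_quad_swap[OF Qc Qs])
  note Zq = pos_semidef_cnj_quad[OF pos_def_imp_pos_semidef[OF Q], of z, folded Zq_eq]
  have "Re (Jq - Rq - lam * Bq) = Re (mu * Zq)" using energy by simp
  then have "- (\<rho>a + \<rho>b) - Re lam * \<sigma> = Re mu * Re Zq"
    using skew_cnj_quad_Re_zero[OF Jc Js, of y] ReR Zq(1) Bq unfolding Jq_def Jy_def by simp
  moreover have "Re mu * Re Zq \<ge> 0" using mu0 Zq(2) by simp
  ultimately have key: "\<rho>a + \<rho>b + Re lam * \<sigma> \<le> 0" by linarith
  have "\<sigma> \<ge> 0" unfolding \<sigma>_def by (simp add: sum_nonneg)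
  then have "Re lam * \<sigma> \<ge> 0" using lam by simp
  then have "\<rho>a = 0" "\<rho>b = 0" "Re lam * \<sigma> = 0" using key \<rho> by linarith+
  then have "\<sigma> = 0" using lam by simp
  have s0: "s l = 0" if "l < m" for l
  proof -
    have "\<forall>l\<in>{..<m}. (cmod (s l))\<^sup>2 = 0"
      using \<open>\<sigma> = 0\<close> unfolding \<sigma>_def by (subst sum_nonneg_eq_0_iff[symmetric]) auto
    then show ?thesis using that by auto
  qed
  have Ry0: "Ry i = 0" if i: "i < n" for i
  proof -
    have "(\<Sum>k<n. R $$ (i,k) * Re (y k)) = 0"
      using pos_semidef_quad_form_zero[OF R \<open>\<rho>a = 0\<close>[unfolded \<rho>a_def] i] .
    moreover have "(\<Sum>k<n. R $$ (i,k) * Im (y k)) = 0"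
      using pos_semidef_quad_form_zero[OF R \<open>\<rho>b = 0\<close>[unfolded \<rho>b_def] i] .
    ultimately show ?thesis unfolding Ry_def by (simp add: complex_eq_iff Re_sum Im_sum)
  qed
  have "z i0 = 0"
  proof (rule observable_eigenvector_zero[OF Ac Cc obs _ _ nz(1)])
    show "(\<Sum>j<n. of_real (A $$ (i,j)) * z j) = mu * z i" if "i < n" for i
      using E[OF that] Az[OF that] Ry0[OF that] s0 unfolding Bs_def by simp
    show "(\<Sum>j<n. of_real (C $$ (l,j)) * z j) = 0" if "l < m" for l
      using action(2)[OF that] s0[OF that] by simp
  qed
  with nz(2) show False by simp
qed


section \<open>Spectrum of coupled systems\<close>

lemma obtain_nonzero_index:
  fixes v :: "'a::zero vec"
  assumes "v \<in> carrier_vec n" "v \<noteq> 0\<^sub>v n"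
  obtains i where "i < n" "v $ i \<noteq> 0"
proof -
  have "\<exists>i<n. v $ i \<noteq> 0"
  proof (rule ccontr)
    assume "\<not> (\<exists>i<n. v $ i \<noteq> 0)"
    then have "v = 0\<^sub>v n" using assms(1) by (intro eq_vecI) auto
    then show False using assms(2) by simp
  qed
  then show ?thesis using that by blast
qed

text \<open>The matrix \<open>I\<^sub>p \<otimes> A - L \<otimes> E\<close>, with \<open>A\<close> and \<open>E\<close> given by their entries.\<close>

definition coupled_mat :: "nat \<Rightarrow> nat \<Rightarrow> (nat \<Rightarrow> nat \<Rightarrow> 'a::comm_ring_1) \<Rightarrow> 'a mat
    \<Rightarrow> (nat \<Rightarrow> nat \<Rightarrow> 'a) \<Rightarrow> 'a mat" where
  "coupled_mat p n A L E = Matrix.mat (p * n) (p * n) (\<lambda>(r,c).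
     (if r div n = c div n then A (r mod n) (c mod n) else 0)
     - L $$ (r div n, c div n) * E (r mod n) (c mod n))"

lemma block_index_less:
  fixes k p i n :: nat
  assumes "k < p" "i < n"
  shows "k * n + i < p * n"
proof -
  have "k * n + i < Suc k * n" using assms(2) by simp
  also have "\<dots> \<le> p * n" using assms(1) by (intro mult_right_mono) auto
  finally show ?thesis .
qed

lemma sum_blocks:
  fixes p n :: nat
  shows "(\<Sum>c<p*n. f c) = (\<Sum>q<p. \<Sum>j<n. f (q*n+j))"
proof (induct p)
  case 0 then show ?case by simp
next
  case (Suc p)
  have U: "{..<Suc p * n} = {..<p*n} \<union> {p*n..<p*n+n}" by auto
  have "(\<Sum>c<Suc p*n. f c) = (\<Sum>c<p*n. f c) + (\<Sum>c\<in>{p*n..<p*n+n}. f c)"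
    unfolding U by (rule sum.union_disjoint) auto
  also have "(\<Sum>c\<in>{p*n..<p*n+n}. f c) = (\<Sum>j<n. f (p*n+j))"
    by (rule sum.reindex_bij_witness[of _ "\<lambda>j. p*n+j" "\<lambda>c. c - p*n"]) auto
  finally show ?case using Suc by simp
qed

lemma coupled_mat_mult_sum:
  assumes k: "k < p" and i: "i < n"
  shows "(\<Sum>l<p*n. coupled_mat p n A L E $$ (k*n+i, l) * f l)
       = (\<Sum>j<n. A i j * f (k*n+j)) - (\<Sum>q<p. L $$ (k,q) * (\<Sum>j<n. E i j * f (q*n+j)))"
proof -
  have r: "k*n+i < p*n" by (rule block_index_less[OF k i])
  have "(\<Sum>l<p*n. coupled_mat p n A L E $$ (k*n+i, l) * f l)
      = (\<Sum>q<p. \<Sum>j<n. (if k = q then A i j * f (q*n+j) else 0) - L $$ (k,q) * (E i j * f (q*n+j)))"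
    unfolding sum_blocks
  proof (intro sum.cong refl)
    fix q j assume q: "q \<in> {..<p}" and j: "j \<in> {..<n}"
    have "q*n+j < p*n" using q j by (intro block_index_less) auto
    then show "coupled_mat p n A L E $$ (k*n+i, q*n+j) * f (q*n+j)
        = (if k = q then A i j * f (q*n+j) else 0) - L $$ (k,q) * (E i j * f (q*n+j))"
      using r i j unfolding coupled_mat_def by (simp add: algebra_simps)
  qed
  also have "\<dots> = (\<Sum>q<p. (if k = q then (\<Sum>j<n. A i j * f (q*n+j)) else 0))
        - (\<Sum>q<p. L $$ (k,q) * (\<Sum>j<n. E i j * f (q*n+j)))"
  proof -
    have "(\<Sum>q<p. \<Sum>j<n. (if k = q then A i j * f (q*n+j) else 0))
        = (\<Sum>q<p. (if k = q then (\<Sum>j<n. A i j * f (q*n+j)) else 0))"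
      by (rule sum.cong[OF refl]) auto
    then show ?thesis by (simp only: sum_subtractf sum_distrib_left)
  qed
  also have "(\<Sum>q<p. (if k = q then (\<Sum>j<n. A i j * f (q*n+j)) else 0)) = (\<Sum>j<n. A i j * f (k*n+j))"
    using k by (simp add: sum.delta)
  finally show ?thesis .
qed

text \<open>Eigenvalues of \<open>I \<otimes> A - L \<otimes> E\<close> are eigenvalues of some \<open>A - \<lambda> E\<close> with \<open>\<lambda>\<close> an
  eigenvalue of \<open>L\<close>: after triangularizing \<open>L\<close> by Schur, the last nonzero block of the
  transformed eigenvector is an eigenvector of \<open>A - \<lambda> E\<close>, \<open>\<lambda>\<close> the corresponding diagonal entry.\<close>

lemma coupled_mat_eigenvector:
  fixes L :: "complex mat" and A E :: "nat \<Rightarrow> nat \<Rightarrow> complex"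
  assumes ev: "eigenvalue (coupled_mat p n A L E) mu"
  obtains v :: "nat \<Rightarrow> complex" and blk idx where "blk < p" "idx < n" "v (blk*n+idx) \<noteq> 0"
    "\<And>k i. k < p \<Longrightarrow> i < n \<Longrightarrow> (\<Sum>j<n. A i j * v (k*n+j))
       - (\<Sum>q<p. L $$ (k,q) * (\<Sum>j<n. E i j * v (q*n+j))) = mu * v (k*n+i)"
proof -
  have F: "coupled_mat p n A L E \<in> carrier_mat (p*n) (p*n)" unfolding coupled_mat_def by simp
  obtain v where v: "v \<in> carrier_vec (p*n)" "v \<noteq> 0\<^sub>v (p*n)" "coupled_mat p n A L E *\<^sub>v v = mu \<cdot>\<^sub>v v"
    using ev F unfolding eigenvalue_def eigenvector_def by auto
  obtain c where c: "c < p*n" "v $ c \<noteq> 0" using obtain_nonzero_index[OF v(1,2)] .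
  have n0: "n > 0" using c by (cases n) auto
  have "c div n < p" "c mod n < n" using c n0 by (simp_all add: less_mult_imp_div_less)
  moreover have "v $ ((c div n) * n + c mod n) \<noteq> 0" using c by simp
  moreover have "(\<Sum>j<n. A i j * v $ (k*n+j)) - (\<Sum>q<p. L $$ (k,q) * (\<Sum>j<n. E i j * v $ (q*n+j)))
      = mu * v $ (k*n+i)" if k: "k < p" and i: "i < n" for k i
  proof -
    have r: "k * n + i < p * n" by (rule block_index_less[OF k i])
    have "(coupled_mat p n A L E *\<^sub>v v) $ (k*n+i) = (\<Sum>l<p*n. coupled_mat p n A L E $$ (k*n+i, l) * v $ l)"
      using r F v(1) by (simp add: scalar_prod_def atLeast0LessThan row_def)
    then show ?thesis
      using v(3) r v(1) coupled_mat_mult_sum[OF k i, where f="\<lambda>l. v $ l"] by simp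
  qed
  ultimately show ?thesis by (rule that[where v = "\<lambda>l. v $ l" and blk = "c div n" and idx = "c mod n"])
qed

lemma coupled_mat_eigenvalue:
  fixes L :: "complex mat" and A E :: "nat \<Rightarrow> nat \<Rightarrow> complex"
  assumes L: "L \<in> carrier_mat p p"
    and block: "\<And>lam z k. eigenvalue L lam \<Longrightarrow>
        (\<And>i. i < n \<Longrightarrow> (\<Sum>j<n. A i j * z j) - lam * (\<Sum>j<n. E i j * z j) = mu * z i) \<Longrightarrow>
        k < n \<Longrightarrow> z k \<noteq> 0 \<Longrightarrow> P (Re mu)"
    and ev: "eigenvalue (coupled_mat p n A L E) mu"
  shows "P (Re mu)"
proof -
  obtain v k1 i1 where k1: "k1 < p" and i1: "i1 < n" and nz: "v (k1*n+i1) \<noteq> 0"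
    and eqv: "\<And>k i. k < p \<Longrightarrow> i < n \<Longrightarrow> (\<Sum>j<n. A i j * v (k*n+j))
       - (\<Sum>q<p. L $$ (k,q) * (\<Sum>j<n. E i j * v (q*n+j))) = mu * v (k*n+i)"
    by (rule coupled_mat_eigenvector[OF ev]) (rule that)
  obtain T Ps Qs where T: "T \<in> carrier_mat p p" and Ps: "Ps \<in> carrier_mat p p"
    and Qs: "Qs \<in> carrier_mat p p" and PQ: "Ps * Qs = 1\<^sub>m p" and QL: "Qs * L = T * Qs"
    and ut: "upper_triangular T" and eig: "\<And>k. k < p \<Longrightarrow> eigenvalue L (T $$ (k,k))"
    by (rule schur_triangularization[OF L]) (rule that)
  define u where "u k i = (\<Sum>l<p. Qs $$ (k,l) * v (l*n+i))" for k i
  define Y where "Y r i = (\<Sum>j<n. E i j * u r j)" for r i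
  have ueq: "(\<Sum>j<n. A i j * u k j) - (\<Sum>r<p. T $$ (k,r) * Y r i) = mu * u k i"
    if k: "k < p" and i: "i < n" for k i
  proof -
    have "(\<Sum>l<p. Qs $$ (k,l) * ((\<Sum>j<n. A i j * v (l*n+j))
          - (\<Sum>q<p. L $$ (l,q) * (\<Sum>j<n. E i j * v (q*n+j)))))
        = (\<Sum>l<p. Qs $$ (k,l) * (mu * v (l*n+i)))"
      using eqv i by (intro sum.cong) auto
    moreover have "(\<Sum>l<p. Qs $$ (k,l) * (mu * v (l*n+i))) = mu * u k i"
      unfolding u_def by (simp add: sum_distrib_left mult.left_commute)
    moreover have "(\<Sum>l<p. Qs $$ (k,l) * (\<Sum>j<n. A i j * v (l*n+j))) = (\<Sum>j<n. A i j * u k j)"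
      unfolding u_def by (rule sum_mult_sum_commute)
    moreover have "(\<Sum>l<p. Qs $$ (k,l) * (\<Sum>q<p. L $$ (l,q) * (\<Sum>j<n. E i j * v (q*n+j))))
        = (\<Sum>r<p. T $$ (k,r) * Y r i)"
    proof -
      have "(\<Sum>l<p. Qs $$ (r,l) * (\<Sum>j<n. E i j * v (l*n+j))) = Y r i" for r
        unfolding Y_def u_def by (rule sum_mult_sum_commute)
      then show ?thesis by (simp add: mult_mat_sum_intertwine[OF Qs L T QL k])
    qed
    ultimately show ?thesis
      by (simp add: right_diff_distrib sum_subtractf)
  qed
  define S where "S = {k. k < p \<and> (\<exists>i<n. u k i \<noteq> 0)}"
  have "S \<noteq> {}"
  proof
    assume "S = {}"
    then have "u k i1 = 0" if "k < p" for k using that i1 unfolding S_def by auto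
    then have "(\<Sum>k<p. Ps $$ (k1,k) * u k i1) = 0" by simp
    then show False using nz mult_mat_sum_inverse[OF Ps Qs PQ k1, of "\<lambda>l. v (l*n+i1)"]
      unfolding u_def by simp
  qed
  moreover have "finite S" unfolding S_def by auto
  ultimately have k0S: "Max S \<in> S" by (rule Max_in[rotated])
  define k0 where "k0 = Max S"
  obtain i0 where k0: "k0 < p" and i0: "i0 < n" "u k0 i0 \<noteq> 0" using k0S unfolding S_def k0_def by auto
  have above: "u r i = 0" if "k0 < r" "r < p" "i < n" for r i
  proof (rule ccontr)
    assume "u r i \<noteq> 0"
    then have "r \<in> S" using that unfolding S_def by auto
    then have "r \<le> k0" unfolding k0_def using \<open>finite S\<close> by simp
    then show False using that by simp
  qed
  have sumT: "(\<Sum>r<p. T $$ (k0,r) * Y r i) = T $$ (k0,k0) * Y k0 i" for i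
  proof -
    have "T $$ (k0,r) * Y r i = 0" if "r \<in> {..<p} - {k0}" for r
    proof (cases "r < k0")
      case True
      then show ?thesis using ut T k0 unfolding upper_triangular_def by auto
    next
      case False
      then show ?thesis unfolding Y_def using above that by auto
    qed
    then have "(\<Sum>r\<in>{..<p} - {k0}. T $$ (k0,r) * Y r i) = 0" by (intro sum.neutral) blast
    then show ?thesis using k0 by (simp add: sum.remove)
  qed
  have "(\<Sum>j<n. A i j * u k0 j) - T $$ (k0,k0) * (\<Sum>j<n. E i j * u k0 j) = mu * u k0 i"
    if "i < n" for i
    using ueq[OF k0 that] sumT[of i] unfolding Y_def by simp
  then show ?thesis by (rule block[where z="u k0" and k=i0, OF eig[OF k0] _ i0])
qed


section \<open>Laplacian matrices\<close>

definition laplacian_matrix :: "nat \<Rightarrow> (nat \<Rightarrow> nat \<Rightarrow> real) \<Rightarrow> bool" where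
  "laplacian_matrix M L \<longleftrightarrow>
     (\<forall>p<M. (\<Sum>q<M. L p q) = 0) \<and> (\<forall>p<M. \<forall>q<M. q \<noteq> p \<longrightarrow> L p q \<le> 0)"

text \<open>\<open>L p q < 0\<close> means that agent \<open>p\<close> listens to agent \<open>q\<close>; \<open>r\<close> is globally reachable when
  every nonempty set of agents that is closed under listening contains \<open>r\<close>.\<close>

definition globally_reachable :: "nat \<Rightarrow> (nat \<Rightarrow> nat \<Rightarrow> real) \<Rightarrow> nat \<Rightarrow> bool" where
  "globally_reachable M L r \<longleftrightarrow> r < M \<and>
     (\<forall>S. S \<subseteq> {..<M} \<longrightarrow> S \<noteq> {} \<longrightarrow>
        (\<forall>p q. p \<in> S \<longrightarrow> q < M \<longrightarrow> p \<noteq> q \<longrightarrow> L p q < 0 \<longrightarrow> q \<in> S) \<longrightarrow> r \<in> S)"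

text \<open>As the rows of \<open>L\<close> sum to zero, \<open>L\<close> acts on the differences \<open>x\<^sub>k\<^sub>+\<^sub>1 - x\<^sub>0\<close>
  through this matrix.\<close>

definition difference_laplacian :: "nat \<Rightarrow> (nat \<Rightarrow> nat \<Rightarrow> real) \<Rightarrow> complex mat" where
  "difference_laplacian M L =
     Matrix.mat (M - 1) (M - 1) (\<lambda>(k,q). complex_of_real (L (k+1) (q+1) - L 0 (q+1)))"

lemma laplacian_matrixD:
  assumes "laplacian_matrix M L"
  shows "\<And>p. p < M \<Longrightarrow> (\<Sum>q<M. L p q) = 0"
    and "\<And>p q. p < M \<Longrightarrow> q < M \<Longrightarrow> q \<noteq> p \<Longrightarrow> L p q \<le> 0"
  using assms unfolding laplacian_matrix_def by auto

lemma laplacian_row_sum_diff: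
  fixes L :: "nat \<Rightarrow> nat \<Rightarrow> real"
  assumes rowsum: "(\<Sum>q<M. L p q) = 0" and p: "p < M"
  shows "(\<Sum>q<M. L p q * x q) = (\<Sum>q\<in>{..<M} - {p}. L p q * (x q - x p))"
proof -
  have "(\<Sum>q<M. L p q * x q) = (\<Sum>q<M. L p q * (x q - x p)) + x p * (\<Sum>q<M. L p q)"
    by (simp add: algebra_simps sum.distrib sum_distrib_left sum_subtractf)
  also have "\<dots> = (\<Sum>q<M. L p q * (x q - x p))" using rowsum by simp
  also have "\<dots> = (\<Sum>q\<in>{..<M} - {p}. L p q * (x q - x p))"
    using p by (subst sum.remove[of _ p]) auto
  finally show ?thesis .
qed

lemma laplacian_row_at_min:
  fixes L :: "nat \<Rightarrow> nat \<Rightarrow> real"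
  assumes rowsum: "(\<Sum>q<M. L p q) = 0" and p: "p < M"
    and offd: "\<And>q. q < M \<Longrightarrow> q \<noteq> p \<Longrightarrow> L p q \<le> 0"
    and min: "\<And>q. q < M \<Longrightarrow> x p \<le> x q"
  shows "(\<Sum>q<M. L p q * x q) \<le> 0"
    and "(\<Sum>q<M. L p q * x q) = 0 \<Longrightarrow> q < M \<Longrightarrow> q \<noteq> p \<Longrightarrow> L p q < 0 \<Longrightarrow> x q = x p"
proof -
  have nonpos: "\<forall>q\<in>{..<M} - {p}. L p q * (x q - x p) \<le> 0"
    using offd min by (auto intro: mult_nonpos_nonneg)
  show "(\<Sum>q<M. L p q * x q) \<le> 0"
    unfolding laplacian_row_sum_diff[where L=L and p=p and M=M, OF rowsum p]
    by (rule sum_nonpos) (use nonpos in auto)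
  assume z: "(\<Sum>q<M. L p q * x q) = 0" and q: "q < M" "q \<noteq> p" "L p q < 0"
  have "(\<Sum>q\<in>{..<M} - {p}. - (L p q * (x q - x p))) = 0"
    using z unfolding laplacian_row_sum_diff[where L=L and p=p and M=M, OF rowsum p]
    by (simp add: sum_negf)
  then have all0: "\<forall>q'\<in>{..<M} - {p}. - (L p q' * (x q' - x p)) = 0"
    using nonpos by (subst sum_nonneg_eq_0_iff[symmetric]) auto
  have "q \<in> {..<M} - {p}" using q by auto
  then have "L p q * (x q - x p) = 0" using all0 by fastforce
  then show "x q = x p" using q by auto
qed

lemma obtain_arg_min_less:
  fixes x :: "nat \<Rightarrow> real"
  assumes "M > 0"
  obtains p where "p < M" "\<And>q. q < M \<Longrightarrow> x p \<le> x q"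
proof -
  have "Min (x ` {..<M}) \<in> x ` {..<M}" using assms by (intro Min_in) auto
  then obtain p where p: "p < M" "x p = Min (x ` {..<M})" by auto
  then show ?thesis using that by auto
qed

lemma laplacian_not_all_ones:
  fixes L :: "nat \<Rightarrow> nat \<Rightarrow> real"
  assumes L: "laplacian_matrix M L" and M: "M > 0"
  shows "\<exists>p<M. (\<Sum>q<M. L p q * x q) \<noteq> 1"
proof -
  obtain p where p: "p < M" "\<And>q. q < M \<Longrightarrow> x p \<le> x q" using obtain_arg_min_less[OF M] by metis
  have "(\<Sum>q<M. L p q * x q) \<le> 0"
    using laplacian_matrixD[OF L] p by (intro laplacian_row_at_min(1)) auto
  then show ?thesis using p by force
qed

text \<open>Minimum principle: a kernel vector attains its minimum on a set closed under listening,
  which then contains the root; applied to \<open>x\<close> and \<open>-x\<close> this makes \<open>x\<close> constant.\<close>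

lemma laplacian_kernel_const:
  fixes L :: "nat \<Rightarrow> nat \<Rightarrow> real"
  assumes L: "laplacian_matrix M L" and r: "globally_reachable M L r"
    and ker: "\<And>p. p < M \<Longrightarrow> (\<Sum>q<M. L p q * x q) = 0"
    and p: "p < M"
  shows "x p = x r"
proof -
  note rowsum = laplacian_matrixD(1)[OF L] and offd = laplacian_matrixD(2)[OF L]
  have M: "M > 0" using p by auto
  have root_min: "x r \<le> x q"
    if "q < M" and ker: "\<And>p. p < M \<Longrightarrow> (\<Sum>q<M. L p q * x q) = 0"
    for q and x :: "nat \<Rightarrow> real"
  proof -
    obtain p where p: "p < M" "\<And>q. q < M \<Longrightarrow> x p \<le> x q" using obtain_arg_min_less[OF M] by metis
    define S where "S = {p'. p' < M \<and> x p' = x p}"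
    have "S \<subseteq> {..<M}" "S \<noteq> {}" using p unfolding S_def by auto
    moreover have "q \<in> S" if p': "p' \<in> S" "q < M" "p' \<noteq> q" "L p' q < 0" for p' q
    proof -
      have min': "x p' \<le> x q'" if "q' < M" for q' using p' p that unfolding S_def by auto
      have "x q = x p'"
        by (rule laplacian_row_at_min(2)[where L=L and p=p' and M=M, OF rowsum _ _ min' ker])
          (use p' offd in \<open>auto simp: S_def\<close>)
      then show "q \<in> S" using p' unfolding S_def by auto
    qed
    ultimately have "r \<in> S" using r unfolding globally_reachable_def by blast
    then show ?thesis using p that unfolding S_def by auto
  qed
  have "x r \<le> x p" using root_min[OF p, of x] ker by blast
  moreover have "- x r \<le> - x p"
    using root_min[OF p, of "\<lambda>q. - x q"] ker by (simp add: sum_negf)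
  ultimately show "x p = x r" by linarith
qed

text \<open>Gershgorin's disc theorem at a coordinate of maximal modulus.\<close>

lemma laplacian_eigenvalue_Re_pos:
  fixes L :: "nat \<Rightarrow> nat \<Rightarrow> real" and x :: "nat \<Rightarrow> complex"
  assumes L: "laplacian_matrix M L"
    and ev: "\<And>p. p < M \<Longrightarrow> (\<Sum>q<M. of_real (L p q) * x q) = z * x p"
    and nz: "p0 < M" "x p0 \<noteq> 0"
    and z: "z \<noteq> 0"
  shows "Re z > 0"
proof -
  note rowsum = laplacian_matrixD(1)[OF L] and offd = laplacian_matrixD(2)[OF L]
  have M: "M > 0" using nz by auto
  obtain p where p: "p < M" "\<And>q. q < M \<Longrightarrow> - cmod (x p) \<le> - cmod (x q)"
    using obtain_arg_min_less[OF M, of "\<lambda>q. - cmod (x q)"] by metis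
  have pmax: "cmod (x q) \<le> cmod (x p)" if "q < M" for q using p(2)[OF that] by simp
  have xp: "cmod (x p) > 0" using pmax[OF nz(1)] nz by auto
  define d where "d = L p p"
  have rs: "(\<Sum>q\<in>{..<M} - {p}. L p q) = - d"
    using rowsum[OF p(1)] p(1) unfolding d_def by (subst (asm) sum.remove[of _ p]) auto
  have d: "d \<ge> 0"
  proof -
    have "(\<Sum>q\<in>{..<M} - {p}. L p q) \<le> 0" by (rule sum_nonpos) (use offd p in auto)
    then show ?thesis using rs by simp
  qed
  have "z * x p = of_real d * x p + (\<Sum>q\<in>{..<M} - {p}. of_real (L p q) * x q)"
    using ev[OF p(1)] p(1) unfolding d_def by (subst (asm) sum.remove[of _ p]) auto
  then have e: "(z - of_real d) * x p = (\<Sum>q\<in>{..<M} - {p}. of_real (L p q) * x q)"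
    by (simp add: algebra_simps)
  have "cmod ((z - of_real d) * x p) \<le> (\<Sum>q\<in>{..<M} - {p}. cmod (of_real (L p q) * x q))"
    unfolding e by (rule norm_sum)
  also have "\<dots> \<le> (\<Sum>q\<in>{..<M} - {p}. (- L p q) * cmod (x p))"
  proof (rule sum_mono)
    fix q assume q: "q \<in> {..<M} - {p}"
    have "cmod (of_real (L p q) * x q) = (- L p q) * cmod (x q)"
      using offd[of p q] q p by (simp add: norm_mult)
    also have "\<dots> \<le> (- L p q) * cmod (x p)"
      using offd[of p q] q p pmax[of q] by (intro mult_left_mono) auto
    finally show "cmod (of_real (L p q) * x q) \<le> (- L p q) * cmod (x p)" .
  qed
  also have "\<dots> = d * cmod (x p)"
    using rs by (simp add: sum_distrib_right[symmetric] sum_negf)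
  finally have "cmod (z - of_real d) * cmod (x p) \<le> d * cmod (x p)" by (simp add: norm_mult)
  then have cm: "cmod (z - of_real d) \<le> d" using xp by simp
  have "(cmod (z - of_real d))\<^sup>2 \<le> d\<^sup>2" using cm by (intro power_mono) auto
  then have "(Re z - d)\<^sup>2 + (Im z)\<^sup>2 \<le> d\<^sup>2" unfolding cmod_power2 by simp
  then have le: "(Re z)\<^sup>2 + (Im z)\<^sup>2 \<le> 2 * d * Re z" by (simp add: power2_eq_square algebra_simps)
  have "(Re z)\<^sup>2 + (Im z)\<^sup>2 > 0" using z complex_eq_iff[of z 0]
    by (auto simp: add_pos_nonneg add_nonneg_pos)
  then have "d * Re z > 0" using le by linarith
  then show ?thesis using d by (simp add: zero_less_mult_iff)
qed


lemma difference_laplacian_eigenvector_lift: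
  fixes L :: "nat \<Rightarrow> nat \<Rightarrow> real"
  assumes rowsum0: "(\<Sum>q<M. L 0 q) = 0" and M: "M > 0"
    and ev: "eigenvalue (difference_laplacian M L) lam"
  obtains x :: "nat \<Rightarrow> complex" and c :: complex and k where "x 0 = 0" "k < M" "x k \<noteq> 0"
    "\<And>P. P < M \<Longrightarrow> (\<Sum>q<M. of_real (L P q) * x q) = lam * x P + c"
proof -
  define p where "p = M - 1"
  have Mp: "M = Suc p" using M unfolding p_def by auto
  obtain v where v: "v \<in> carrier_vec p" "v \<noteq> 0\<^sub>v p" "difference_laplacian M L *\<^sub>v v = lam \<cdot>\<^sub>v v"
    using ev unfolding eigenvalue_def eigenvector_def difference_laplacian_def p_def by auto
  obtain k1 where k1: "k1 < p" "v $ k1 \<noteq> 0" using obtain_nonzero_index[OF v(1,2)] .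
  define x where "x q = (if q = 0 then 0 else v $ (q - 1))" for q
  define c where "c = (\<Sum>q<M. complex_of_real (L 0 q) * x q)"
  have shift: "(\<Sum>q<M. complex_of_real (L P q) * x q) = (\<Sum>q<p. complex_of_real (L P (q+1)) * v $ q)"
    for P unfolding Mp sum.lessThan_Suc_shift by (simp add: x_def)
  have Lv: "(\<Sum>q<p. complex_of_real (L (k+1) (q+1) - L 0 (q+1)) * v $ q) = lam * v $ k"
    if k: "k < p" for k
  proof -
    have "(difference_laplacian M L *\<^sub>v v) $ k
        = (\<Sum>q<p. complex_of_real (L (k+1) (q+1) - L 0 (q+1)) * v $ q)"
      using k v(1) unfolding difference_laplacian_def p_def
      by (simp add: scalar_prod_def atLeast0LessThan row_def)
    then show ?thesis using v(3) k v(1) by simp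
  qed
  have "(\<Sum>q<M. complex_of_real (L P q) * x q) = lam * x P + c" if P: "P < M" for P
  proof (cases P)
    case 0 then show ?thesis unfolding c_def x_def by simp
  next
    case (Suc k)
    then have k: "k < p" using P Mp by simp
    have "(\<Sum>q<M. complex_of_real (L P q) * x q) - c
        = (\<Sum>q<p. complex_of_real (L (k+1) (q+1) - L 0 (q+1)) * v $ q)"
      unfolding c_def shift Suc by (simp add: sum_subtractf algebra_simps)
    also have "\<dots> = lam * x P" using Lv[OF k] unfolding x_def Suc by simp
    finally show ?thesis by (simp add: algebra_simps)
  qed
  moreover have "x 0 = 0" "Suc k1 < M" "x (Suc k1) \<noteq> 0" using k1 Mp unfolding x_def by auto
  ultimately show ?thesis using that by blast
qed

text \<open>For \<open>\<lambda> \<noteq> 0\<close>, \<open>x + c/\<lambda>\<close> is an eigenvector of \<open>L\<close> itself; for \<open>\<lambda> = 0\<close> either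
  \<open>L x = 0\<close>, so \<open>x\<close> is constant and hence zero, or \<open>L (x/c)\<close> is the all-ones vector.\<close>

lemma difference_laplacian_eigenvalue_Re_pos:
  fixes L :: "nat \<Rightarrow> nat \<Rightarrow> real"
  assumes L: "laplacian_matrix M L" and r: "globally_reachable M L r"
    and ev: "eigenvalue (difference_laplacian M L) lam"
  shows "Re lam > 0"
proof -
  note rowsum = laplacian_matrixD(1)[OF L]
  have M: "M > 0" using r unfolding globally_reachable_def by auto
  obtain x c k where x0: "x 0 = 0" and k: "k < M" "x k \<noteq> 0"
    and eqx: "\<And>P. P < M \<Longrightarrow> (\<Sum>q<M. of_real (L P q) * x q) = lam * x P + c"
    by (rule difference_laplacian_eigenvector_lift[OF rowsum[OF M] M ev]) (rule that)
  show ?thesis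
  proof (cases "lam = 0")
    case lam0: True
    show ?thesis
    proof (cases "c = 0")
      case True
      then have ker: "(\<Sum>q<M. complex_of_real (L P q) * x q) = 0" if "P < M" for P
        using eqx[OF that] lam0 by simp
      have "(\<Sum>q<M. L P q * Re (x q)) = 0" "(\<Sum>q<M. L P q * Im (x q)) = 0" if "P < M" for P
        using arg_cong[OF ker[OF that], of Re] arg_cong[OF ker[OF that], of Im]
        by (simp_all add: Re_sum Im_sum)
      then have "Re (x P) = Re (x r)" "Im (x P) = Im (x r)" if "P < M" for P
        using laplacian_kernel_const[OF L r, of "\<lambda>q. Re (x q)" P]
          laplacian_kernel_const[OF L r, of "\<lambda>q. Im (x q)" P] that by auto
      then have "x P = x 0" if "P < M" for P
        using that M by (simp add: complex_eq_iff)
      then show ?thesis using k x0 by simp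
    next
      case False
      define y where "y q = x q / c" for q
      have one: "(\<Sum>q<M. complex_of_real (L P q) * y q) = 1" if "P < M" for P
        using eqx[OF that] lam0 False unfolding y_def by (simp add: sum_divide_distrib[symmetric])
      have "(\<Sum>q<M. L P q * Re (y q)) = 1" if "P < M" for P
        using arg_cong[of _ _ Re, OF one[OF that]] by (simp add: Re_sum)
      with laplacian_not_all_ones[OF L M, of "\<lambda>q. Re (y q)"] show ?thesis by auto
    qed
  next
    case False
    define y where "y q = x q + c / lam" for q
    have "(\<Sum>q<M. complex_of_real (L P q) * y q) = lam * y P" if P: "P < M" for P
    proof -
      have "(\<Sum>q<M. complex_of_real (L P q) * y q)
          = (\<Sum>q<M. complex_of_real (L P q) * x q) + (c / lam) * complex_of_real (\<Sum>q<M. L P q)"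
        unfolding y_def by (simp add: algebra_simps sum.distrib sum_distrib_left)
      also have "\<dots> = lam * y P" using eqx[OF P] rowsum[OF P] False unfolding y_def
        by (simp add: algebra_simps)
      finally show ?thesis .
    qed
    moreover have "\<exists>P0<M. y P0 \<noteq> 0"
      using k M x0 False unfolding y_def by (cases "c = 0") (auto intro: exI[of _ 0])
    ultimately show ?thesis using laplacian_eigenvalue_Re_pos[OF L] False by blast
  qed
qed

section \<open>Spanning trees and the clustered Laplacian\<close>

lemma is_walk_iff_successively: "is_walk adj N vs \<longleftrightarrow> vs \<noteq> [] \<and> set vs \<subseteq> {0..<N} \<and> successively adj vs"
  unfolding is_walk_def successively_conv_nth by auto

lemma distinct_walk:
  assumes "is_walk adj N vs"
  shows "\<exists>vs'. is_walk adj N vs' \<and> distinct vs' \<and> hd vs' = hd vs \<and> last vs' = last vs"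
  using assms
proof (induct "length vs" arbitrary: vs rule: less_induct)
  case less
  show ?case
  proof (cases "distinct vs")
    case True then show ?thesis using less(2) by blast
  next
    case False
    then obtain xs y ys zs where vs: "vs = xs @ [y] @ ys @ [y] @ zs"
      using not_distinct_decomp by blast
    define vs2 where "vs2 = xs @ [y] @ zs"
    have w: "vs \<noteq> []" "set vs \<subseteq> {0..<N}" "successively adj vs"
      using less(2) unfolding is_walk_iff_successively by auto
    have s1: "successively adj (xs @ [y])"
      using w(3) unfolding vs by (simp add: successively_append_iff)
    have s2: "successively adj ([y] @ zs)"
      using w(3) unfolding vs
      by (metis append_assoc successively_append_iff)
    have "successively adj ((xs @ [y]) @ zs)"
      using s1 s2 by (cases zs) (auto simp only: successively_append_iff, auto)
    then have "successively adj vs2" unfolding vs2_def by simp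
    moreover have "set vs2 \<subseteq> {0..<N}" using w(2) unfolding vs vs2_def by auto
    ultimately have wk: "is_walk adj N vs2" unfolding is_walk_iff_successively vs2_def by auto
    have len: "length vs2 < length vs" unfolding vs vs2_def by simp
    have hd: "hd vs2 = hd vs" unfolding vs vs2_def by (cases xs) auto
    have lst: "last vs2 = last vs" unfolding vs vs2_def by (cases zs rule: rev_cases) auto
    from less(1)[OF len wk] hd lst show ?thesis by metis
  qed
qed

lemma und_adj_commute: "und_adj w x y \<Longrightarrow> und_adj w y x"
  unfolding und_adj_def by auto

text \<open>An edge of the tree \<open>G\<^sub>u\<close> missing from the spanning tree would close a cycle with
  the spanning-tree path between its ends.\<close>

lemma ugraph_tree_edge_in_spanning_tree:
  assumes tree: "ugraph_tree (und_adj w) N"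
    and Tarcs: "T \<subseteq> arcs w N"
    and w_nonneg: "\<forall>i < N. \<forall>j < N. i \<noteq> j \<longrightarrow> w i j \<ge> 0"
    and Ttree: "ugraph_tree (\<lambda>a b. (a, b) \<in> T \<or> (b, a) \<in> T) N"
    and x: "x < N" and y: "y < N" and xy: "und_adj w x y"
  shows "(x, y) \<in> T \<or> (y, x) \<in> T"
proof (rule ccontr)
  assume nT: "\<not> ((x, y) \<in> T \<or> (y, x) \<in> T)"
  let ?a = "\<lambda>a b. (a, b) \<in> T \<or> (b, a) \<in> T"
  obtain vs where vs: "is_walk ?a N vs" "hd vs = x" "last vs = y"
    using Ttree x y unfolding ugraph_tree_def ugraph_connected_def by blast
  then obtain vs' where vs': "is_walk ?a N vs'" "distinct vs'" "hd vs' = x" "last vs' = y"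
    using distinct_walk[OF vs(1)] vs(2,3) by auto
  have xney: "x \<noteq> y" using xy unfolding und_adj_def by auto
  have ne: "vs' \<noteq> []" using vs' unfolding is_walk_def by auto
  have len2: "length vs' \<ge> 2"
  proof (rule ccontr)
    assume "\<not> length vs' \<ge> 2"
    then have "length vs' = 1" using ne by (cases vs') (auto simp: Suc_le_eq)
    then obtain z where "vs' = [z]" by (cases vs') auto
    then show False using vs' xney by auto
  qed
  have len3: "length vs' \<ge> 3"
  proof (rule ccontr)
    assume "\<not> length vs' \<ge> 3"
    then have "length vs' = 2" using len2 by auto
    then obtain a b where ab: "vs' = [a, b]"
      by (cases vs'; cases "tl vs'") auto
    then have "?a a b" using vs'(1) unfolding is_walk_def by (auto dest: spec[of _ 0])
    then show False using nT vs' ab by auto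
  qed
  have adjw: "und_adj w a b" if "?a a b" for a b
  proof -
    from that have "(a,b) \<in> arcs w N \<or> (b,a) \<in> arcs w N" using Tarcs by auto
    then show ?thesis unfolding arcs_def und_adj_def using w_nonneg by fastforce
  qed
  have "is_walk (und_adj w) N vs'"
    using vs'(1) adjw unfolding is_walk_def by blast
  moreover have "und_adj w (last vs') (hd vs')" using vs' xy und_adj_commute by auto
  ultimately have "is_cycle (und_adj w) N vs'"
    unfolding is_cycle_def using len3 vs'(2) by auto
  then show False using tree unfolding ugraph_tree_def by auto
qed

text \<open>On the tree path from \<open>s\<close> to the root every arc points towards \<open>s\<close>, since each
  vertex other than the root has a unique parent.\<close>

lemma spanning_tree_root_in_closed:
  assumes Ttree: "ugraph_tree (\<lambda>a b. (a, b) \<in> T \<or> (b, a) \<in> T) N"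
    and uniq: "\<forall>v < N. v \<noteq> r \<longrightarrow> (\<exists>!u. (u, v) \<in> T)"
    and root: "\<forall>u. (u, r) \<notin> T"
    and r: "r < N"
    and closed: "\<And>u v. (u, v) \<in> T \<Longrightarrow> v \<in> S \<Longrightarrow> u \<in> S"
    and s: "s \<in> S" "s < N"
  shows "r \<in> S"
proof -
  let ?a = "\<lambda>a b. (a, b) \<in> T \<or> (b, a) \<in> T"
  obtain vs0 where vs0: "is_walk ?a N vs0" "hd vs0 = s" "last vs0 = r"
    using Ttree s r unfolding ugraph_tree_def ugraph_connected_def by blast
  then obtain vs where vs: "is_walk ?a N vs" "distinct vs" "hd vs = s" "last vs = r"
    using distinct_walk[OF vs0(1)] by auto
  define L where "L = length vs"
  have ne: "vs \<noteq> []" using vs unfolding is_walk_def by auto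
  then have L1: "L \<ge> 1" unfolding L_def by (cases vs) auto
  have lastL: "vs ! (L - 1) = r" using vs(4) ne unfolding L_def by (simp add: last_conv_nth)
  have hd0: "vs ! 0 = s" using vs(3) ne by (simp add: hd_conv_nth)
  have inN: "vs ! l < N" if "l < L" for l
    using vs(1) that unfolding is_walk_def L_def by (auto dest: nth_mem)
  have adjl: "?a (vs ! l) (vs ! Suc l)" if "Suc l < L" for l
    using vs(1) that unfolding is_walk_def L_def by auto
  have bk: "\<forall>l. Suc l < L \<longrightarrow> L - 2 - l = d \<longrightarrow> (vs ! Suc l, vs ! l) \<in> T" for d
  proof (induct d)
    case 0
    show ?case
    proof (intro allI impI)
      fix l assume l: "Suc l < L" "L - 2 - l = 0"
      then have "Suc l = L - 1" by auto
      then have "vs ! Suc l = r" using lastL by simp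
      then show "(vs ! Suc l, vs ! l) \<in> T" using adjl[OF l(1)] root by auto
    qed
  next
    case (Suc d)
    show ?case
    proof (intro allI impI)
      fix l assume l: "Suc l < L" "L - 2 - l = Suc d"
      then have l2: "Suc (Suc l) < L" by auto
      have p: "(vs ! Suc (Suc l), vs ! Suc l) \<in> T" using Suc l2 l(2) by auto
      then have nr: "vs ! Suc l \<noteq> r" using root by metis
      show "(vs ! Suc l, vs ! l) \<in> T"
      proof (rule ccontr)
        assume "(vs ! Suc l, vs ! l) \<notin> T"
        then have "(vs ! l, vs ! Suc l) \<in> T" using adjl[OF l(1)] by auto
        then have "vs ! l = vs ! Suc (Suc l)"
          using uniq inN[OF l(1)] nr p by metis
        then show False using vs(2) l2 unfolding L_def by (simp add: nth_eq_iff_index_eq)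
      qed
    qed
  qed
  have fwd: "l < L \<Longrightarrow> vs ! l \<in> S" for l
  proof (induct l)
    case 0 then show ?case using hd0 s by simp
  next
    case (Suc l)
    then have "(vs ! Suc l, vs ! l) \<in> T" using bk by auto
    then show ?case using Suc closed by auto
  qed
  show ?thesis using fwd[of "L - 1"] lastL L1 by simp
qed


definition clustered_laplacian :: "(nat \<Rightarrow> nat \<Rightarrow> real) \<Rightarrow> nat \<Rightarrow> real mat" where
  "clustered_laplacian w N = transpose_mat (clusterW w N) * laplacian w N * clusterV N"

text \<open>Vertices \<open>N - 2\<close> and \<open>N - 1\<close> are merged into cluster \<open>N - 2\<close>:
  \<open>V(s,q) = [cluster_index N s = q]\<close> and \<open>W(r,p) = [cluster_index N r = p] * cluster_weight w N r\<close>.\<close>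

definition cluster_index :: "nat \<Rightarrow> nat \<Rightarrow> nat" where
  "cluster_index N s = (if s < N - 2 then s else N - 2)"

definition cluster_weight :: "(nat \<Rightarrow> nat \<Rightarrow> real) \<Rightarrow> nat \<Rightarrow> nat \<Rightarrow> real" where
  "cluster_weight w N r = (if r < N - 2 then 1
     else if r = N - 2 then w (N - 1) (N - 2) / (w (N - 2) (N - 1) + w (N - 1) (N - 2))
     else w (N - 2) (N - 1) / (w (N - 2) (N - 1) + w (N - 1) (N - 2)))"

lemma clustered_laplacian_carrier: "clustered_laplacian w N \<in> carrier_mat (N - 1) (N - 1)"
proof -
  have "clusterW w N \<in> carrier_mat N (N - 1)" "clusterV N \<in> carrier_mat N (N - 1)"
    "laplacian w N \<in> carrier_mat N N"
    unfolding clusterW_def clusterV_def laplacian_def by auto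
  then show ?thesis unfolding clustered_laplacian_def by (meson mult_carrier_mat transpose_carrier_mat)
qed

lemma clusterV_entry:
  "s < N \<Longrightarrow> q < N - 1 \<Longrightarrow> clusterV N $$ (s,q) = (if cluster_index N s = q then 1 else 0)"
  unfolding clusterV_def cluster_index_def by auto

lemma clusterW_entry:
  "r < N \<Longrightarrow> p < N - 1 \<Longrightarrow>
   clusterW w N $$ (r,p) = (if cluster_index N r = p then cluster_weight w N r else 0)"
  unfolding clusterW_def cluster_index_def cluster_weight_def by auto

lemma cluster_index_less: "N \<ge> 2 \<Longrightarrow> cluster_index N s < N - 1"
  unfolding cluster_index_def by auto

lemma laplacian_entry:
  "r < N \<Longrightarrow> s < N \<Longrightarrow> laplacian w N $$ (r,s) =
     (if r = s then (\<Sum>k \<in> {0..<N} - {r}. w r k) else - w r s)"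
  unfolding laplacian_def by simp

lemma laplacian_row_sum:
  assumes r: "r < N"
  shows "(\<Sum>s<N. laplacian w N $$ (r,s)) = 0"
proof -
  have "(\<Sum>s<N. laplacian w N $$ (r,s))
      = laplacian w N $$ (r,r) + (\<Sum>s\<in>{..<N} - {r}. laplacian w N $$ (r,s))"
    using r by (simp add: sum.remove)
  also have "(\<Sum>s\<in>{..<N} - {r}. laplacian w N $$ (r,s)) = (\<Sum>s\<in>{..<N} - {r}. - w r s)"
    using r by (intro sum.cong) (auto simp: laplacian_entry)
  also have "laplacian w N $$ (r,r) = (\<Sum>s\<in>{..<N} - {r}. w r s)"
    using r by (simp add: laplacian_entry atLeast0LessThan)
  finally show ?thesis by (simp add: sum_negf)
qed

lemma clustered_laplacian_entry:
  assumes N: "N \<ge> 2" and p: "p < N - 1" and q: "q < N - 1"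
  shows "clustered_laplacian w N $$ (p,q)
    = (\<Sum>r<N. (if cluster_index N r = p then cluster_weight w N r else 0)
        * (\<Sum>s<N. laplacian w N $$ (r,s) * (if cluster_index N s = q then 1 else 0)))"
proof -
  have Wc: "clusterW w N \<in> carrier_mat N (N - 1)" unfolding clusterW_def by simp
  have Vc: "clusterV N \<in> carrier_mat N (N - 1)" unfolding clusterV_def by simp
  have Lc: "laplacian w N \<in> carrier_mat N N" unfolding laplacian_def by simp
  have WTc: "transpose_mat (clusterW w N) \<in> carrier_mat (N - 1) N" using Wc by simp
  have WLc: "transpose_mat (clusterW w N) * laplacian w N \<in> carrier_mat (N - 1) N" using WTc Lc by simp
  have "clustered_laplacian w N $$ (p,q)
      = (\<Sum>s<N. (transpose_mat (clusterW w N) * laplacian w N) $$ (p,s) * clusterV N $$ (s,q))"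
    unfolding clustered_laplacian_def using index_mult_mat_sum[OF WLc Vc p q] .
  also have "\<dots> = (\<Sum>s<N. (\<Sum>r<N. clusterW w N $$ (r,p) * laplacian w N $$ (r,s))
      * (if cluster_index N s = q then 1 else 0))"
    using Wc p q by (intro sum.cong refl) (simp add: index_mult_mat_sum[OF WTc Lc p] clusterV_entry)
  also have "\<dots> = (\<Sum>r<N. clusterW w N $$ (r,p)
      * (\<Sum>s<N. laplacian w N $$ (r,s) * (if cluster_index N s = q then 1 else 0)))"
    by (rule sum_mult_sum_swap[symmetric])
  also have "\<dots> = (\<Sum>r<N. (if cluster_index N r = p then cluster_weight w N r else 0)
      * (\<Sum>s<N. laplacian w N $$ (r,s) * (if cluster_index N s = q then 1 else 0)))"
    using p by (intro sum.cong refl) (simp add: clusterW_entry)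
  finally show ?thesis .
qed

lemma cluster_weight_nonneg:
  assumes w_nonneg: "\<forall>i < N. \<forall>j < N. i \<noteq> j \<longrightarrow> w i j \<ge> 0"
    and adj_last: "und_adj w (N - 2) (N - 1)" and N: "N \<ge> 2"
  shows "cluster_weight w N r \<ge> 0"
proof -
  have "w (N - 2) (N - 1) + w (N - 1) (N - 2) > 0" using adj_last unfolding und_adj_def by auto
  moreover have "w (N - 2) (N - 1) \<ge> 0" "w (N - 1) (N - 2) \<ge> 0" using w_nonneg N by auto
  ultimately show ?thesis unfolding cluster_weight_def by auto
qed

lemma clustered_laplacian_term_nonpos:
  assumes w_nonneg: "\<forall>i < N. \<forall>j < N. i \<noteq> j \<longrightarrow> w i j \<ge> 0"
    and adj_last: "und_adj w (N - 2) (N - 1)" and N: "N \<ge> 2"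
    and r: "r < N" and pq: "p \<noteq> q"
  shows "(if cluster_index N r = p then cluster_weight w N r else 0)
      * (\<Sum>s<N. laplacian w N $$ (r,s) * (if cluster_index N s = q then 1 else 0)) \<le> 0"
proof (cases "cluster_index N r = p")
  case True
  have "laplacian w N $$ (r,s) * (if cluster_index N s = q then 1 else 0) \<le> 0" if "s < N" for s
  proof (cases "cluster_index N s = q")
    case True
    then have "s \<noteq> r" using \<open>cluster_index N r = p\<close> pq by auto
    then show ?thesis using True that r w_nonneg by (simp add: laplacian_entry)
  qed simp
  then have "(\<Sum>s<N. laplacian w N $$ (r,s) * (if cluster_index N s = q then 1 else 0)) \<le> 0"
    by (intro sum_nonpos) auto
  then show ?thesis
    using True cluster_weight_nonneg[OF w_nonneg adj_last N] by (simp add: mult_nonneg_nonpos)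
qed simp

lemma clustered_laplacian_laplacian_matrix:
  assumes w_nonneg: "\<forall>i < N. \<forall>j < N. i \<noteq> j \<longrightarrow> w i j \<ge> 0"
    and adj_last: "und_adj w (N - 2) (N - 1)" and N: "N \<ge> 2"
  shows "laplacian_matrix (N - 1) (\<lambda>p q. clustered_laplacian w N $$ (p,q))"
  unfolding laplacian_matrix_def
proof (intro conjI allI impI)
  fix p assume p: "p < N - 1"
  let ?\<pi> = "cluster_index N" and ?\<alpha> = "cluster_weight w N"
  have "(\<Sum>q<N - 1. clustered_laplacian w N $$ (p,q))
      = (\<Sum>q<N - 1. \<Sum>r<N. (if ?\<pi> r = p then ?\<alpha> r else 0)
          * (\<Sum>s<N. laplacian w N $$ (r,s) * (if ?\<pi> s = q then 1 else 0)))"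
    using p N by (intro sum.cong refl) (simp add: clustered_laplacian_entry)
  also have "\<dots> = (\<Sum>r<N. \<Sum>q<N - 1. (if ?\<pi> r = p then ?\<alpha> r else 0)
          * (\<Sum>s<N. laplacian w N $$ (r,s) * (if ?\<pi> s = q then 1 else 0)))"
    by (rule sum.swap)
  also have "\<dots> = (\<Sum>r<N. (if ?\<pi> r = p then ?\<alpha> r else 0) * (\<Sum>s<N. laplacian w N $$ (r,s)))"
  proof (intro sum.cong refl)
    fix r
    have "(\<Sum>q<N - 1. \<Sum>s<N. laplacian w N $$ (r,s) * (if ?\<pi> s = q then 1 else 0))
        = (\<Sum>s<N. \<Sum>q<N - 1. laplacian w N $$ (r,s) * (if ?\<pi> s = q then 1 else 0))"
      by (rule sum.swap)
    also have "\<dots> = (\<Sum>s<N. laplacian w N $$ (r,s))"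
      using cluster_index_less[OF N] by (simp add: sum_distrib_left[symmetric])
    finally show "(\<Sum>q<N - 1. (if ?\<pi> r = p then ?\<alpha> r else 0)
          * (\<Sum>s<N. laplacian w N $$ (r,s) * (if ?\<pi> s = q then 1 else 0)))
        = (if ?\<pi> r = p then ?\<alpha> r else 0) * (\<Sum>s<N. laplacian w N $$ (r,s))"
      by (simp add: sum_distrib_left[symmetric])
  qed
  also have "\<dots> = 0" by (simp add: laplacian_row_sum)
  finally show "(\<Sum>q<N - 1. clustered_laplacian w N $$ (p,q)) = 0" .
  fix q assume q: "q < N - 1" and qp: "q \<noteq> p"
  show "clustered_laplacian w N $$ (p,q) \<le> 0"
    unfolding clustered_laplacian_entry[OF N p q]
    using clustered_laplacian_term_nonpos[OF w_nonneg adj_last N] qp by (intro sum_nonpos) auto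
qed

lemma sum_le_member_nonpos:
  fixes f :: "'a \<Rightarrow> real"
  assumes "finite A" "v \<in> A" "\<And>x. x \<in> A - {v} \<Longrightarrow> f x \<le> 0"
  shows "sum f A \<le> f v"
proof -
  have "sum f (A - {v}) \<le> 0" using assms(3) by (rule sum_nonpos)
  then show ?thesis using assms(1,2) by (simp add: sum.remove)
qed

lemma clustered_laplacian_neg_entry:
  assumes w_nonneg: "\<forall>i < N. \<forall>j < N. i \<noteq> j \<longrightarrow> w i j \<ge> 0"
    and adj_last: "und_adj w (N - 2) (N - 1)" and N: "N \<ge> 2"
    and vu: "v < N" "u < N" "cluster_index N v \<noteq> cluster_index N u" "w v u > 0"
    and pos: "cluster_weight w N v > 0"
  shows "clustered_laplacian w N $$ (cluster_index N v, cluster_index N u) < 0"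
proof -
  let ?\<pi> = "cluster_index N" and ?\<alpha> = "cluster_weight w N"
  have "clustered_laplacian w N $$ (?\<pi> v, ?\<pi> u)
      \<le> (if ?\<pi> v = ?\<pi> v then ?\<alpha> v else 0)
        * (\<Sum>s<N. laplacian w N $$ (v,s) * (if ?\<pi> s = ?\<pi> u then 1 else 0))"
    unfolding clustered_laplacian_entry[OF N cluster_index_less[OF N] cluster_index_less[OF N]]
    by (rule sum_le_member_nonpos)
      (use vu clustered_laplacian_term_nonpos[OF w_nonneg adj_last N _ vu(3)] in auto)
  also have "(\<Sum>s<N. laplacian w N $$ (v,s) * (if ?\<pi> s = ?\<pi> u then 1 else 0))
      \<le> laplacian w N $$ (v,u) * (if ?\<pi> u = ?\<pi> u then 1 else 0)"
    by (rule sum_le_member_nonpos) (use vu w_nonneg in \<open>auto simp: laplacian_entry\<close>)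
  then have "(if ?\<pi> v = ?\<pi> v then ?\<alpha> v else 0)
        * (\<Sum>s<N. laplacian w N $$ (v,s) * (if ?\<pi> s = ?\<pi> u then 1 else 0))
      \<le> ?\<alpha> v * laplacian w N $$ (v,u)"
    using pos by (simp add: mult_left_mono)
  also have "?\<alpha> v * laplacian w N $$ (v,u) < 0"
    using vu pos by (auto simp: laplacian_entry mult_pos_neg)
  finally show ?thesis .
qed


lemma cluster_weight_pos_on_arc:
  assumes N3: "N \<ge> 3" and adj_last: "und_adj w (N - 2) (N - 1)"
    and T: "T \<subseteq> arcs w N" "\<forall>v < N. v \<noteq> r \<longrightarrow> (\<exists>!u. (u, v) \<in> T)" "\<forall>u. (u, r) \<notin> T"
    and edge: "(N - 2, N - 1) \<in> T \<or> (N - 1, N - 2) \<in> T"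
    and uv: "(u, v) \<in> T" "cluster_index N u \<noteq> cluster_index N v"
  shows "cluster_weight w N v > 0"
proof -
  from uv T(1) have uvN: "u < N" "v < N" "u \<noteq> v" "w v u > 0" unfolding arcs_def by auto
  have vr: "v \<noteq> r" using uv T(3) by auto
  have s0: "w (N - 2) (N - 1) + w (N - 1) (N - 2) > 0" using adj_last unfolding und_adj_def by auto
  show ?thesis
  proof (cases "v < N - 2")
    case True then show ?thesis unfolding cluster_weight_def by simp
  next
    case False
    then have uN2: "u < N - 2" using uv uvN unfolding cluster_index_def by (auto split: if_splits)
    show ?thesis
    proof (cases "v = N - 2")
      case True
      have "w (N - 1) (N - 2) > 0"
      proof (rule ccontr)
        assume "\<not> w (N - 1) (N - 2) > 0"
        then have "(N - 1, N - 2) \<in> T" using edge T(1) unfolding arcs_def by auto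
        then have "u = N - 1" using T(2) uvN vr uv(1) True by metis
        then show False using uN2 by simp
      qed
      then show ?thesis unfolding cluster_weight_def using True s0 N3 by simp
    next
      case False
      then have vN1: "v = N - 1" using \<open>\<not> v < N - 2\<close> uvN by auto
      have "w (N - 2) (N - 1) > 0"
      proof (rule ccontr)
        assume "\<not> w (N - 2) (N - 1) > 0"
        then have "(N - 2, N - 1) \<in> T" using edge T(1) unfolding arcs_def by auto
        then have "u = N - 2" using T(2) uvN vr uv(1) vN1 by metis
        then show False using uN2 by simp
      qed
      then show ?thesis unfolding cluster_weight_def using False \<open>\<not> v < N - 2\<close> s0 by simp
    qed
  qed
qed

text \<open>The cluster of the root of a directed spanning tree is globally reachable in the
  clustered graph: an arc of the tree between different clusters gives a negative entry of the
  clustered Laplacian, since the cluster weight of its head is positive.\<close>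

lemma clustered_laplacian_globally_reachable:
  assumes N3: "N \<ge> 3"
    and w_nonneg: "\<forall>i < N. \<forall>j < N. i \<noteq> j \<longrightarrow> w i j \<ge> 0"
    and treeA: "ugraph_tree (und_adj w) N"
    and spanA: "has_directed_rooted_spanning_tree w N"
    and adj_last: "und_adj w (N - 2) (N - 1)"
  obtains r where "globally_reachable (N - 1) (\<lambda>p q. clustered_laplacian w N $$ (p,q)) r"
proof -
  have N: "N \<ge> 2" using N3 by simp
  obtain T r where T: "T \<subseteq> arcs w N" "r < N" "\<forall>v < N. v \<noteq> r \<longrightarrow> (\<exists>!u. (u, v) \<in> T)"
    "\<forall>u. (u, r) \<notin> T" "ugraph_tree (\<lambda>a b. (a, b) \<in> T \<or> (b, a) \<in> T) N"
    using spanA unfolding has_directed_rooted_spanning_tree_def by blast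
  have edge: "(N - 2, N - 1) \<in> T \<or> (N - 1, N - 2) \<in> T"
    using ugraph_tree_edge_in_spanning_tree[OF treeA T(1) w_nonneg T(5) _ _ adj_last] N3 by auto
  have "globally_reachable (N - 1) (\<lambda>p q. clustered_laplacian w N $$ (p,q)) (cluster_index N r)"
    unfolding globally_reachable_def
  proof (intro conjI allI impI)
    show "cluster_index N r < N - 1" using cluster_index_less[OF N] .
    fix S assume S: "S \<subseteq> {..<N - 1}" "S \<noteq> {}"
      and cl: "\<forall>p q. p \<in> S \<longrightarrow> q < N - 1 \<longrightarrow> p \<noteq> q \<longrightarrow> clustered_laplacian w N $$ (p,q) < 0 \<longrightarrow> q \<in> S"
    obtain s where s: "s \<in> S" using S by auto
    then have sM: "s < N - 1" using S by auto
    then have ps: "cluster_index N s = s" unfolding cluster_index_def by auto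
    define S' where "S' = {v. v < N \<and> cluster_index N v \<in> S}"
    have "r \<in> S'"
    proof (rule spanning_tree_root_in_closed[OF T(5) T(3) T(4) T(2)])
      show "s \<in> S'" "s < N" using s ps sM unfolding S'_def by auto
      fix u v assume uv: "(u, v) \<in> T" "v \<in> S'"
      from uv T(1) have uvN: "u < N" "v < N" "w v u > 0" unfolding arcs_def by auto
      show "u \<in> S'"
      proof (cases "cluster_index N u = cluster_index N v")
        case True then show ?thesis using uv uvN unfolding S'_def by auto
      next
        case False
        have "clustered_laplacian w N $$ (cluster_index N v, cluster_index N u) < 0"
          using clustered_laplacian_neg_entry[OF w_nonneg adj_last N uvN(2,1) _ uvN(3)]
            cluster_weight_pos_on_arc[OF N3 adj_last T(1,3,4) edge uv(1) False] False by auto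
        then have "cluster_index N u \<in> S"
          using cl uv False cluster_index_less[OF N] unfolding S'_def by auto
        then show ?thesis using uvN unfolding S'_def by auto
      qed
    qed
    then show "cluster_index N r \<in> S" unfolding S'_def by auto
  qed
  then show ?thesis by (rule that)
qed


section \<open>Synchronization of the reduced network\<close>

lemma kron_mult_vec:
  assumes X: "X \<in> carrier_mat a b" and Y: "Y \<in> carrier_mat c d"
    and v: "v \<in> carrier_vec (b * d)" and P: "P < a" and i: "i < c"
  shows "(kron X Y *\<^sub>v v) $ (P * c + i) = (\<Sum>q<b. \<Sum>j<d. X $$ (P,q) * Y $$ (i,j) * v $ (q * d + j))"
proof -
  have r: "P * c + i < a * c" by (rule block_index_less[OF P i])
  have "(kron X Y *\<^sub>v v) $ (P * c + i) = (\<Sum>s<b*d. kron X Y $$ (P * c + i, s) * v $ s)"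
    using r X Y v unfolding kron_def by (simp add: scalar_prod_def atLeast0LessThan row_def)
  also have "\<dots> = (\<Sum>q<b. \<Sum>j<d. kron X Y $$ (P * c + i, q * d + j) * v $ (q * d + j))"
    by (rule sum_blocks)
  also have "\<dots> = (\<Sum>q<b. \<Sum>j<d. X $$ (P,q) * Y $$ (i,j) * v $ (q * d + j))"
  proof (intro sum.cong refl)
    fix q j assume q: "q \<in> {..<b}" and j: "j \<in> {..<d}"
    have "q * d + j < b * d" using q j by (intro block_index_less) auto
    then show "kron X Y $$ (P * c + i, q * d + j) * v $ (q * d + j)
        = X $$ (P,q) * Y $$ (i,j) * v $ (q * d + j)"
      using r X Y i j unfolding kron_def by simp
  qed
  finally show ?thesis .
qed

lemma kron_network_mult_vec:
  fixes A E L :: "real mat"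
  assumes A: "A \<in> carrier_mat n n" and E: "E \<in> carrier_mat n n" and L: "L \<in> carrier_mat M M"
    and x: "x \<in> carrier_vec (M * n)" and P: "P < M" and i: "i < n"
  shows "((kron (1\<^sub>m M) A - kron L E) *\<^sub>v x) $ (P * n + i)
    = (\<Sum>j<n. A $$ (i,j) * x $ (P * n + j)) - (\<Sum>q<M. L $$ (P,q) * (\<Sum>j<n. E $$ (i,j) * x $ (q * n + j)))"
proof -
  have idx: "P * n + i < M * n" by (rule block_index_less[OF P i])
  have K1: "kron (1\<^sub>m M) A \<in> carrier_mat (M * n) (M * n)" unfolding kron_def using A by simp
  have K2: "kron L E \<in> carrier_mat (M * n) (M * n)" unfolding kron_def using L E by simp
  have "(kron (1\<^sub>m M) A *\<^sub>v x) $ (P * n + i)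
      = (\<Sum>q<M. if q = P then (\<Sum>j<n. A $$ (i,j) * x $ (q * n + j)) else 0)"
    unfolding kron_mult_vec[OF one_carrier_mat A x P i]
    using P by (intro sum.cong refl) (auto simp: sum_distrib_left)
  also have "\<dots> = (\<Sum>j<n. A $$ (i,j) * x $ (P * n + j))" using P by (simp add: sum.delta')
  finally have "(kron (1\<^sub>m M) A *\<^sub>v x) $ (P * n + i) = (\<Sum>j<n. A $$ (i,j) * x $ (P * n + j))" .
  moreover have "(kron L E *\<^sub>v x) $ (P * n + i)
      = (\<Sum>q<M. L $$ (P,q) * (\<Sum>j<n. E $$ (i,j) * x $ (q * n + j)))"
    unfolding kron_mult_vec[OF L E x P i] by (simp add: sum_distrib_left mult.assoc)
  ultimately show ?thesis
    using K1 K2 x idx by (simp add: minus_mult_distrib_mat_vec)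
qed

text \<open>Since the rows of \<open>L\<close> sum to zero, the deviations \<open>x\<^sub>k\<^sub>+\<^sub>1 - x\<^sub>0\<close> of a network
  \<open>x\<^sub>P' = A x\<^sub>P - \<Sum>\<^sub>q L\<^sub>P\<^sub>q E x\<^sub>q\<close> obey the closed system \<open>I \<otimes> A - D \<otimes> E\<close> with
  \<open>D = difference_laplacian\<close>.\<close>

lemma network_difference_ode:
  fixes x :: "real \<Rightarrow> nat \<Rightarrow> real" and A E L :: "nat \<Rightarrow> nat \<Rightarrow> real"
  assumes rowsum: "\<And>P. P < Suc p \<Longrightarrow> (\<Sum>q<Suc p. L P q) = 0"
    and der: "\<And>P i. P < Suc p \<Longrightarrow> i < n \<Longrightarrow> ((\<lambda>s. x s (P*n+i)) has_real_derivative
        (\<Sum>j<n. A i j * x t (P*n+j)) - (\<Sum>q<Suc p. L P q * (\<Sum>j<n. E i j * x t (q*n+j)))) (at t)"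
    and k: "k < p" and i: "i < n"
  defines "d \<equiv> \<lambda>s r. complex_of_real (x s ((r div n + 1) * n + r mod n) - x s (r mod n))"
  shows "((\<lambda>s. d s (k*n+i)) has_vector_derivative
      (\<Sum>l<p*n. coupled_mat p n (\<lambda>i j. of_real (A i j)) (difference_laplacian (Suc p) L)
         (\<lambda>i j. of_real (E i j)) $$ (k*n+i, l) * d t l)) (at t)"
proof -
  define \<delta> where "\<delta> q j = x t ((q+1)*n + j) - x t j" for q j
  have d_block: "d s (q*n+j) = complex_of_real (x s ((q+1)*n+j) - x s j)" if "j < n" for s q j
    unfolding d_def using that by simp
  define Z where "Z q = (\<Sum>j<n. E i j * x t (q*n+j))" for q
  define c where "c q = L (k+1) q - L 0 q" for q
  have "(\<Sum>q<Suc p. L (k+1) q * Z q) - (\<Sum>q<Suc p. L 0 q * Z q)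
      = (\<Sum>q<Suc p. c q * (Z q - Z 0)) + (\<Sum>q<Suc p. c q) * Z 0"
    unfolding c_def by (simp add: algebra_simps sum_subtractf sum_distrib_left sum_distrib_right)
  also have "\<dots> = (\<Sum>q<Suc p. c q * (Z q - Z 0))"
    using rowsum[of "k+1"] rowsum[of 0] k unfolding c_def by (simp add: sum_subtractf)
  also have "\<dots> = (\<Sum>q<p. c (q+1) * (Z (q+1) - Z 0))"
    unfolding sum.lessThan_Suc_shift by simp
  also have "\<dots> = (\<Sum>q<p. c (q+1) * (\<Sum>j<n. E i j * \<delta> q j))"
    unfolding Z_def \<delta>_def by (simp add: sum_subtractf right_diff_distrib)
  finally have coupling: "(\<Sum>q<Suc p. L (k+1) q * Z q) - (\<Sum>q<Suc p. L 0 q * Z q)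
      = (\<Sum>q<p. c (q+1) * (\<Sum>j<n. E i j * \<delta> q j))" .
  have "(\<Sum>j<n. A i j * x t ((k+1)*n+j)) - (\<Sum>j<n. A i j * x t (0*n+j))
      = (\<Sum>j<n. A i j * \<delta> k j)"
    unfolding \<delta>_def by (simp add: sum_subtractf right_diff_distrib)
  then have rhs: "((\<Sum>j<n. A i j * x t ((k+1)*n+j)) - (\<Sum>q<Suc p. L (k+1) q * Z q))
      - ((\<Sum>j<n. A i j * x t (0*n+j)) - (\<Sum>q<Suc p. L 0 q * Z q))
      = (\<Sum>j<n. A i j * \<delta> k j) - (\<Sum>q<p. c (q+1) * (\<Sum>j<n. E i j * \<delta> q j))"
    using coupling by linarith
  have "((\<lambda>s. x s ((k+1)*n+i) - x s (0*n+i)) has_real_derivative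
      ((\<Sum>j<n. A i j * x t ((k+1)*n+j)) - (\<Sum>q<Suc p. L (k+1) q * Z q))
      - ((\<Sum>j<n. A i j * x t (0*n+j)) - (\<Sum>q<Suc p. L 0 q * Z q))) (at t)"
    unfolding Z_def by (rule DERIV_diff[OF der der]) (use k i in simp_all)
  then have "((\<lambda>s. complex_of_real (x s ((k+1)*n+i) - x s (0*n+i))) has_vector_derivative complex_of_real
      ((\<Sum>j<n. A i j * \<delta> k j) - (\<Sum>q<p. c (q+1) * (\<Sum>j<n. E i j * \<delta> q j)))) (at t)"
    unfolding rhs by (rule has_vector_derivative_of_real)
  moreover have "(\<lambda>s. d s (k*n+i)) = (\<lambda>s. complex_of_real (x s ((k+1)*n+i) - x s (0*n+i)))"
    unfolding d_def using i by simp
  ultimately have "((\<lambda>s. d s (k*n+i)) has_vector_derivative complex_of_real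
      ((\<Sum>j<n. A i j * \<delta> k j) - (\<Sum>q<p. c (q+1) * (\<Sum>j<n. E i j * \<delta> q j)))) (at t)"
    by simp
  moreover have "(\<Sum>l<p*n. coupled_mat p n (\<lambda>i j. of_real (A i j)) (difference_laplacian (Suc p) L)
         (\<lambda>i j. of_real (E i j)) $$ (k*n+i, l) * d t l)
      = complex_of_real ((\<Sum>j<n. A i j * \<delta> k j) - (\<Sum>q<p. c (q+1) * (\<Sum>j<n. E i j * \<delta> q j)))"
    unfolding coupled_mat_mult_sum[OF k i]
    using k by (simp add: d_block \<delta>_def c_def difference_laplacian_def)
  ultimately show ?thesis by simp
qed


lemma port_hamiltonian_coupled_mat_hurwitz:
  fixes Q J R B A C :: "real mat" and L :: "complex mat"
  assumes Q: "pos_def n Q" and J: "J \<in> carrier_mat n n" "skew_mat J" and R: "pos_semidef n R"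
    and B: "B \<in> carrier_mat n m" and A_def: "A = (J - R) * Q" and C_def: "C = transpose_mat B * Q"
    and obs: "observable n A C"
    and L: "L \<in> carrier_mat p p" and L_pos: "\<And>lam. eigenvalue L lam \<Longrightarrow> Re lam > 0"
    and ev: "eigenvalue (coupled_mat p n (\<lambda>i j. of_real (A $$ (i,j))) L
               (\<lambda>i j. of_real ((B * C) $$ (i,j)))) mu"
  shows "Re mu < 0"
  using L _ ev
proof (rule coupled_mat_eigenvalue[where P = "\<lambda>x. x < 0"])
  fix lam z k
  assume "eigenvalue L lam" "k < n" "z k \<noteq> 0"
    and "\<And>i. i < n \<Longrightarrow> (\<Sum>j<n. of_real (A $$ (i,j)) * z j)
      - lam * (\<Sum>j<n. of_real ((B * C) $$ (i,j)) * z j) = mu * z i"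
  then show "Re mu < 0"
    using port_hamiltonian_feedback_eigenvalue[OF Q J R B A_def C_def obs] L_pos by blast
qed

lemma port_hamiltonian_network_synchronizes:
  fixes Q J R B A C :: "real mat" and L :: "nat \<Rightarrow> nat \<Rightarrow> real" and x :: "real \<Rightarrow> nat \<Rightarrow> real"
  assumes Q: "pos_def n Q" and J: "J \<in> carrier_mat n n" "skew_mat J" and R: "pos_semidef n R"
    and B: "B \<in> carrier_mat n m" and A_def: "A = (J - R) * Q" and C_def: "C = transpose_mat B * Q"
    and obs: "observable n A C"
    and L: "laplacian_matrix M L" and r: "globally_reachable M L r"
    and der: "\<And>t P i. t > 0 \<Longrightarrow> P < M \<Longrightarrow> i < n \<Longrightarrow> ((\<lambda>s. x s (P*n+i)) has_real_derivative
        (\<Sum>j<n. A $$ (i,j) * x t (P*n+j))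
        - (\<Sum>q<M. L P q * (\<Sum>j<n. (B * C) $$ (i,j) * x t (q*n+j)))) (at t)"
    and P: "P < M" and i: "i < n"
  shows "((\<lambda>t. x t (P*n+i) - x t i) \<longlongrightarrow> 0) at_top"
proof (cases P)
  case (Suc k)
  obtain p where M: "M = Suc p" using P by (cases M) auto
  define F where "F = coupled_mat p n (\<lambda>i j. of_real (A $$ (i,j))) (difference_laplacian M L)
    (\<lambda>i j. of_real ((B * C) $$ (i,j)))"
  define d where "d s r = complex_of_real (x s ((r div n + 1) * n + r mod n) - x s (r mod n))" for s r
  have "((\<lambda>t. d t (k*n+i)) \<longlongrightarrow> 0) at_top"
  proof (rule hurwitz_ode_tendsto_zero)
    show "F \<in> carrier_mat (p*n) (p*n)" unfolding F_def coupled_mat_def by simp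
    show "Re mu < 0" if "eigenvalue F mu" for mu
      by (rule port_hamiltonian_coupled_mat_hurwitz[OF Q J R B A_def C_def obs _ _ that[unfolded F_def]])
        (use difference_laplacian_eigenvalue_Re_pos[OF L r] M in \<open>auto simp: difference_laplacian_def\<close>)
    show "((\<lambda>s. d s l) has_vector_derivative (\<Sum>l'<p*n. F $$ (l,l') * d t l')) (at t)"
      if "t > 0" "l < p*n" for t l
    proof -
      have "n > 0" using that by (cases n) auto
      define k' where "k' = l div n"
      define i' where "i' = l mod n"
      have k': "k' < p" and i': "i' < n" and l: "k' * n + i' = l"
        using that \<open>n > 0\<close> by (auto simp: k'_def i'_def less_mult_imp_div_less)
      have "((\<lambda>s. d s (k'*n+i')) has_vector_derivative (\<Sum>l'<p*n. F $$ (k'*n+i', l') * d t l')) (at t)"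
        using network_difference_ode[OF laplacian_matrixD(1)[OF L, unfolded M]
            der[OF \<open>t > 0\<close>, unfolded M] k' i']
        unfolding F_def d_def M .
      then show ?thesis unfolding l .
    qed
    show "k*n+i < p*n" using P i M Suc by (intro block_index_less) auto
  qed
  moreover have "d t (k*n+i) = complex_of_real (x t (P*n+i) - x t i)" for t
    unfolding d_def Suc using i by simp
  ultimately have "((\<lambda>t. complex_of_real (x t (P*n+i) - x t i)) \<longlongrightarrow> complex_of_real 0) at_top"
    by simp
  then show ?thesis unfolding tendsto_of_real_iff .
qed simp


lemma network_solution_deriv:
  fixes A E L K :: "real mat" and \<xi> :: "real \<Rightarrow> real vec" and v :: "real vec"
  assumes A: "A \<in> carrier_mat n n" and E: "E \<in> carrier_mat n n" and L: "L \<in> carrier_mat M M"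
    and K: "dim_row K = M * n" "dim_col K = k" and \<xi>: "\<xi> t \<in> carrier_vec (M * n)" and t: "t > 0"
    and P: "P < M" and i: "i < n"
    and sol: "((\<lambda>s. \<xi> s $ (P*n+i)) has_real_derivative
        ((kron (1\<^sub>m M) A - kron L E) *\<^sub>v \<xi> t + K *\<^sub>v 0\<^sub>v k) $ (P*n+i)) (at t within {0..})"
  shows "((\<lambda>s. \<xi> s $ (P*n+i)) has_real_derivative
      (\<Sum>j<n. A $$ (i,j) * \<xi> t $ (P*n+j))
      - (\<Sum>q<M. L $$ (P,q) * (\<Sum>j<n. E $$ (i,j) * \<xi> t $ (q*n+j)))) (at t)"
proof -
  have idx: "P * n + i < M * n" by (rule block_index_less[OF P i])
  have "(K *\<^sub>v 0\<^sub>v k) $ (P*n+i) = 0" using K idx by (simp add: scalar_prod_def)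
  moreover have "dim_row (kron (1\<^sub>m M) A - kron L E) = M * n" unfolding kron_def using A L E by simp
  ultimately have "((kron (1\<^sub>m M) A - kron L E) *\<^sub>v \<xi> t + K *\<^sub>v 0\<^sub>v k) $ (P*n+i)
      = ((kron (1\<^sub>m M) A - kron L E) *\<^sub>v \<xi> t) $ (P*n+i)"
    using K idx by simp
  also have "\<dots> = (\<Sum>j<n. A $$ (i,j) * \<xi> t $ (P*n+j))
      - (\<Sum>q<M. L $$ (P,q) * (\<Sum>j<n. E $$ (i,j) * \<xi> t $ (q*n+j)))"
    by (rule kron_network_mult_vec[OF A E L \<xi> P i])
  finally have "((\<lambda>s. \<xi> s $ (P*n+i)) has_real_derivative
      (\<Sum>j<n. A $$ (i,j) * \<xi> t $ (P*n+j))
      - (\<Sum>q<M. L $$ (P,q) * (\<Sum>j<n. E $$ (i,j) * \<xi> t $ (q*n+j)))) (at t within {0<..})"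
    using sol by (auto intro: DERIV_subset)
  moreover have "at t within {0<..} = at t" using t by (intro at_within_open) auto
  ultimately show ?thesis by simp
qed

theorem theorem3:
  fixes n m N mbar :: nat
    and Q J R B A C G :: "real mat"
    and w :: "nat \<Rightarrow> nat \<Rightarrow> real"
    and \<xi> :: "real \<Rightarrow> real vec"
    and u :: "real \<Rightarrow> real vec"
  assumes Q: "pos_def n Q"
    and J: "J \<in> carrier_mat n n" "skew_mat J"
    and R: "pos_semidef n R"
    and B: "B \<in> carrier_mat n m"
    and A_def: "A = (J - R) * Q"
    and C_def: "C = transpose_mat B * Q"
    and minimal: "minimal_realization n A B C"
    and N3: "N \<ge> 3"
    and w_nonneg: "\<forall>i < N. \<forall>j < N. i \<noteq> j \<longrightarrow> w i j \<ge> 0"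
    and G: "G \<in> carrier_mat N mbar"
    and treeA: "ugraph_tree (und_adj w) N"
    and spanA: "has_directed_rooted_spanning_tree w N"
    and adj_last: "und_adj w (N - 2) (N - 1)"
    and u_zero: "\<forall>t \<ge> 0. u t = 0\<^sub>v (mbar * m)"
    and \<xi>_dim: "\<forall>t \<ge> 0. \<xi> t \<in> carrier_vec ((N - 1) * n)"
    and \<xi>_sol: "\<forall>t \<ge> 0. \<forall>k < (N - 1) * n.
        ((\<lambda>s. \<xi> s $ k) has_real_derivative
           ((kron (1\<^sub>m (N - 1)) A
               - kron (transpose_mat (clusterW w N) * laplacian w N * clusterV N) (B * C)) *\<^sub>v \<xi> t
            + kron (transpose_mat (clusterW w N) * G) B *\<^sub>v u t) $ k)
        (at t within {0..})"
  shows "\<forall>p < N - 1. \<forall>q < N - 1. \<forall>i < n.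
           ((\<lambda>t. \<xi> t $ (p * n + i) - \<xi> t $ (q * n + i)) \<longlongrightarrow> 0) at_top"
proof (intro allI impI)
  define L where "L p q = clustered_laplacian w N $$ (p,q)" for p q
  have N: "N \<ge> 2" using N3 by simp
  have lap: "laplacian_matrix (N - 1) L"
    unfolding L_def by (rule clustered_laplacian_laplacian_matrix[OF w_nonneg adj_last N])
  obtain r where r: "globally_reachable (N - 1) L r"
    using clustered_laplacian_globally_reachable[OF N3 w_nonneg treeA spanA adj_last]
    unfolding L_def by blast
  have Qc: "Q \<in> carrier_mat n n" and Rc: "R \<in> carrier_mat n n"
    using Q R unfolding pos_def_def pos_semidef_def by auto
  have Ac: "A \<in> carrier_mat n n" and BCc: "B * C \<in> carrier_mat n n"
    using J(1) Rc Qc B unfolding A_def C_def by auto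
  have der: "((\<lambda>s. \<xi> s $ (P*n+i)) has_real_derivative (\<Sum>j<n. A $$ (i,j) * \<xi> t $ (P*n+j))
      - (\<Sum>q<N - 1. L P q * (\<Sum>j<n. (B * C) $$ (i,j) * \<xi> t $ (q*n+j)))) (at t)"
    if "t > 0" "P < N - 1" "i < n" for t P i
  proof -
    have "t \<ge> 0" using that by simp
    have K: "dim_row (kron (transpose_mat (clusterW w N) * G) B) = (N - 1) * n"
      "dim_col (kron (transpose_mat (clusterW w N) * G) B) = mbar * m"
      unfolding kron_def clusterW_def using B G by auto
    show ?thesis
      using network_solution_deriv[where \<xi> = \<xi> and t = t, OF Ac BCc clustered_laplacian_carrier K \<xi>_dim[rule_format, OF \<open>t \<ge> 0\<close>] that,
          OF \<xi>_sol[rule_format, OF \<open>t \<ge> 0\<close> block_index_less[OF that(2,3)],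
            unfolded u_zero[rule_format, OF \<open>t \<ge> 0\<close>], folded clustered_laplacian_def]]
      unfolding L_def .
  qed
  have obs: "observable n A C" using minimal unfolding minimal_realization_def by simp
  have sync: "((\<lambda>t. \<xi> t $ (P*n+i) - \<xi> t $ i) \<longlongrightarrow> 0) at_top" if "P < N - 1" "i < n" for P i
    by (rule port_hamiltonian_network_synchronizes[where x = "\<lambda>t k. \<xi> t $ k",
          OF Q J R B A_def C_def obs lap r _ that]) (rule der)
  fix p q i assume "p < N - 1" "q < N - 1" "i < n"
  from tendsto_diff[OF sync[OF this(1,3)] sync[OF this(2,3)]]
  show "((\<lambda>t. \<xi> t $ (p * n + i) - \<xi> t $ (q * n + i)) \<longlongrightarrow> 0) at_top" by simp
qed

end
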